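(* Let $\mathbf A,\mathbf B$ be real $3\times3$ positive-definite symmetric matrices with $\mathbf B=\mathbf R\mathbf A\mathbf R^T$ for some $\mathbf R\in\mathrm O(3)$. If there are $\mathbf Q\in\mathrm{SO}(3)$ and $\mathbf a,\mathbf n\in\mathbb R^3$ with $\mathbf Q\mathbf B-\mathbf A=\mathbf a\otimes\mathbf n$, then there is a unit vector $\hat{\mathbf e}\in\mathbb R^3$ such that $$\mathbf B=(-\mathbf I+2\hat{\mathbf e}\otimes\hat{\mathbf e})\mathbf A(-\mathbf I+2\hat{\mathbf e}\otimes\hat{\mathbf e}).\qquad( * )$$ Conversely, if $\mathbf A,\mathbf B$ satisfy $( * )$ for some unit vector $\hat{\mathbf e}$, then there are $\mathbf Q\in\mathrm{SO}(3)$ and $\mathbf a,\mathbf n\in\mathbb R^3$ with $\mathbf Q\mathbf B-\mathbf A=\mathbf a\otimes\mathbf n$. Moreover, under these hypotheses there is an orthonormal basis $\{\mathbf e_1,\mathbf e_2,\mathbf e_3\}$ such that $$\mathbf A^{-1}\mathbf B^2\mathbf A^{-1}=\mu_1\mathbf e_1\otimes\mathbf e_1+\mathbf e_2\otimes\mathbf e_2+\mu_3\mathbf e_3\otimes\mathbf e_3,\quad 0<\mu_1\le1\le\mu_3,$$ and $$\mu_1\mu_3=1,\quad \mathbf e_1\cdot\mathbf A^2\mathbf e_1=\mu_3\,\mathbf e_3\cdot\mathbf A^2\mathbf e_3,\quad (\mathbf e_2\cdot\mathbf A^2\mathbf e_1)^2=\mu_3(\mathbf e_2\cdot\mathbf A^2\mathbf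 e_3)^2.$$ If $\mu_3>1$, all unit vectors $\hat{\mathbf e}$ satisfying $( * )$ are given by $$\hat{\mathbf e}=\pm(\delta_1\mathbf A\mathbf e_1+\delta_3\mathbf A\mathbf e_3),\quad \delta_1=\Big(2\big(\mathbf e_1\cdot\mathbf A^2\mathbf e_1+s\sqrt{\mu_3}\,\mathbf e_3\cdot\mathbf A^2\mathbf e_1\big)\Big)^{-1/2},\quad \delta_3=s\sqrt{\mu_3}\,\delta_1,$$ where $s\in\{\pm1\}$ satisfies $s\sqrt{\mu_3}(\mathbf e_2\cdot\mathbf A^2\mathbf e_3)=-\mathbf e_2\cdot\mathbf A^2\mathbf e_1$. If $\mu_3=1$, then necessarily $\mathbf B=\mathbf A$ and $\hat{\mathbf e}$ can be chosen as a normalized eigenvector of $\mathbf A$.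
   Context: $\mathbf a\otimes\mathbf n$ denotes the matrix $\mathbf x\mapsto(\mathbf n\cdot\mathbf x)\mathbf a$. $\mathrm O(3)$ is the orthogonal group and $\mathrm{SO}(3)$ the rotation group. *)

theory Defs
  imports "HOL-Analysis.Analysis"
begin

definition outer :: "real^3 \<Rightarrow> real^3 \<Rightarrow> real^3^3" where
  "outer a n = (\<chi> i j. a$i * n$j)"

definition sym_posdef :: "real^3^3 \<Rightarrow> bool" where
  "sym_posdef A \<longleftrightarrow> transpose A = A \<and> (\<forall>x. x \<noteq> 0 \<longrightarrow> x \<bullet> (A *v x) > 0)"

definition in_O3 :: "real^3^3 \<Rightarrow> bool" where
  "in_O3 R \<longleftrightarrow> orthogonal_matrix R"

definition in_SO3 :: "real^3^3 \<Rightarrow> bool" where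
  "in_SO3 Q \<longleftrightarrow> orthogonal_matrix Q \<and> det Q = 1"

definition refl_mat :: "real^3 \<Rightarrow> real^3^3" where
  "refl_mat e = - mat 1 + 2 *\<^sub>R outer e e"

definition orthonormal3 :: "real^3 \<Rightarrow> real^3 \<Rightarrow> real^3 \<Rightarrow> bool" where
  "orthonormal3 e1 e2 e3 \<longleftrightarrow>
     e1 \<bullet> e1 = 1 \<and> e2 \<bullet> e2 = 1 \<and> e3 \<bullet> e3 = 1 \<and>
     e1 \<bullet> e2 = 0 \<and> e1 \<bullet> e3 = 0 \<and> e2 \<bullet> e3 = 0"

definition rank_one_connected :: "real^3^3 \<Rightarrow> real^3^3 \<Rightarrow> bool" where
  "rank_one_connected A B \<longleftrightarrow> (\<exists>Q a n. in_SO3 Q \<and> Q ** B - A = outer a n)"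

definition star_cond :: "real^3^3 \<Rightarrow> real^3^3 \<Rightarrow> real^3 \<Rightarrow> bool" where
  "star_cond A B e \<longleftrightarrow> norm e = 1 \<and> B = refl_mat e ** A ** refl_mat e"

end

theory Submission
  imports Defs
begin

text \<open>
  Let \<open>C = A\<^sup>-\<^sup>1 B\<^sup>2 A\<^sup>-\<^sup>1\<close>. If \<open>Q B - A = a \<otimes> n\<close>, the quadratic form of \<open>C\<close> is Euclidean on a plane,
  and \<open>det C = 1\<close> because \<open>B\<close> is conjugate to \<open>A\<close>; hence the eigenvalues of \<open>C\<close> are
  \<open>\<mu>1 \<le> 1 = \<mu>2 \<le> \<mu>3\<close> with \<open>\<mu>1 \<mu>3 = 1\<close>. Conjugacy also gives \<open>tr (C A\<^sup>2) = tr A\<^sup>2\<close> and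
  \<open>tr (C A\<^sup>2 C A\<^sup>2) = tr A\<^sup>4\<close>, which in the eigenbasis of \<open>C\<close> become the two identities for \<open>A\<^sup>2\<close>.

  For \<open>B = P A P\<close> with \<open>P = -I + 2 e \<otimes> e\<close>, the tensor \<open>C\<close> is \<open>K K\<^sup>T\<close> for the involution
  \<open>K = A\<^sup>-\<^sup>1 P A = 2 p \<otimes> q - I\<close>, where \<open>p = A\<^sup>-\<^sup>1 e\<close> and \<open>q = A e\<close>. Since \<open>K\<close> exchanges the
  eigenspaces of \<open>\<mu>1\<close> and \<open>\<mu>3\<close>, the vector \<open>p\<close> is a multiple of \<open>e1 \<plusminus> \<surd>\<mu>3 e3\<close>, which gives the
  formula for \<open>e\<close>. Conversely this \<open>e\<close> reproduces \<open>C\<close>, and \<open>C\<close> determines \<open>B\<close> as the positive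
  definite square root of \<open>A C A\<close>. A reflected conjugate \<open>P A P\<close> is rank-one connected to \<open>A\<close> via
  \<open>Q = P' P\<close>, where \<open>P'\<close> is the half-turn about \<open>A\<^sup>-\<^sup>1 e\<close>.
\<close>

section \<open>Linear algebra in orthonormal frames\<close>

lemma outer_mult_vec: "outer a n *v x = (n \<bullet> x) *\<^sub>R a"
  unfolding outer_def matrix_vector_mult_def inner_vec_def vec_eq_iff
  by (simp add: sum_distrib_left algebra_simps)

lemma transpose_outer: "transpose (outer a n) = outer n a"
  by (simp add: outer_def transpose_def vec_eq_iff mult.commute)

lemma inner_mult_vec_symmetric:
  fixes M :: "real^'n^'n"
  assumes "transpose M = M"
  shows "x \<bullet> (M *v y) = (M *v x) \<bullet> y"
  by (metis assms dot_lmul_matrix transpose_matrix_vector)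

lemma matrix_eqI:
  fixes M N :: "real^'n^'m"
  shows "(\<And>x. M *v x = N *v x) \<Longrightarrow> M = N"
  by (rule iffD2[OF matrix_eq]) blast

lemma orthogonal_matrix_inner:
  fixes Q :: "real^'n^'n"
  assumes "orthogonal_matrix Q"
  shows "(Q *v x) \<bullet> (Q *v y) = x \<bullet> y"
proof -
  have "(Q *v x) v* Q = x"
    using assms unfolding orthogonal_matrix_def
    by (metis matrix_vector_mul_assoc matrix_vector_mul_lid transpose_matrix_vector)
  then show ?thesis using dot_lmul_matrix[of "Q *v x" Q y] by simp
qed

lemma orthonormal3_inner:
  assumes "orthonormal3 u1 u2 u3"
  shows "u1 \<bullet> u1 = 1" "u2 \<bullet> u2 = 1" "u3 \<bullet> u3 = 1"
    "u1 \<bullet> u2 = 0" "u1 \<bullet> u3 = 0" "u2 \<bullet> u3 = 0"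
    "u2 \<bullet> u1 = 0" "u3 \<bullet> u1 = 0" "u3 \<bullet> u2 = 0"
  using assms unfolding orthonormal3_def by (auto simp: inner_commute)

definition rows3 :: "real^3 \<Rightarrow> real^3 \<Rightarrow> real^3 \<Rightarrow> real^3^3" where
  "rows3 u1 u2 u3 = vector [u1, u2, u3]"

lemma rows3_mult_vec: "rows3 u1 u2 u3 *v x = vector [u1 \<bullet> x, u2 \<bullet> x, u3 \<bullet> x]"
  unfolding rows3_def vec_eq_iff forall_3 by (simp add: matrix_vector_mult_def inner_vec_def)

lemma transpose_rows3_mult_vec:
  "transpose (rows3 u1 u2 u3) *v y = (y$1) *\<^sub>R u1 + (y$2) *\<^sub>R u2 + (y$3) *\<^sub>R u3"
  unfolding rows3_def matrix_vector_mult_def transpose_def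
  by (simp add: vec_eq_iff sum_3 mult_ac)

lemma orthogonal_matrix_rows3:
  assumes "orthonormal3 u1 u2 u3"
  shows "orthogonal_matrix (rows3 u1 u2 u3)"
proof -
  note o = orthonormal3_inner[OF assms]
  have "rows3 u1 u2 u3 *v (transpose (rows3 u1 u2 u3) *v y) = y" for y
    unfolding transpose_rows3_mult_vec rows3_mult_vec
    by (simp only: inner_add_right inner_scaleR_right o vec_eq_iff forall_3 vector_3) simp
  then have "rows3 u1 u2 u3 ** transpose (rows3 u1 u2 u3) = mat 1"
    unfolding matrix_eq by (simp add: matrix_vector_mul_assoc[symmetric])
  then show ?thesis
    unfolding orthogonal_matrix_def using matrix_left_right_inverse by auto
qed

lemma orthonormal3_expand:
  assumes "orthonormal3 u1 u2 u3"
  shows "x = (u1 \<bullet> x) *\<^sub>R u1 + (u2 \<bullet> x) *\<^sub>R u2 + (u3 \<bullet> x) *\<^sub>R u3"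
proof -
  have "transpose (rows3 u1 u2 u3) ** rows3 u1 u2 u3 = mat 1"
    using orthogonal_matrix_rows3[OF assms] unfolding orthogonal_matrix_def by simp
  then have "x = transpose (rows3 u1 u2 u3) *v (rows3 u1 u2 u3 *v x)"
    by (simp add: matrix_vector_mul_assoc)
  then show ?thesis unfolding rows3_mult_vec transpose_rows3_mult_vec by (simp only: vector_3)
qed

lemma orthonormal3_parseval:
  assumes "orthonormal3 u1 u2 u3"
  shows "x \<bullet> y = (u1 \<bullet> x) * (u1 \<bullet> y) + (u2 \<bullet> x) * (u2 \<bullet> y) + (u3 \<bullet> x) * (u3 \<bullet> y)"
  by (subst (1) orthonormal3_expand[OF assms, of y]) (simp add: inner_add_right inner_commute)

lemma orthonormal3_vec_eqI:
  assumes "orthonormal3 u1 u2 u3" "u1 \<bullet> x = u1 \<bullet> y" "u2 \<bullet> x = u2 \<bullet> y" "u3 \<bullet> x = u3 \<bullet> y"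
  shows "x = y"
  using orthonormal3_expand[OF assms(1), of x] orthonormal3_expand[OF assms(1), of y] assms(2-4)
  by simp

lemma orthonormal3_matrix_eqI:
  fixes M N :: "real^3^3"
  assumes on: "orthonormal3 u1 u2 u3"
    and eq: "\<And>x y. x \<in> {u1, u2, u3} \<Longrightarrow> y \<in> {u1, u2, u3} \<Longrightarrow> x \<bullet> (M *v y) = x \<bullet> (N *v y)"
  shows "M = N"
proof (rule matrix_eqI)
  fix x
  have on_basis: "M *v y = N *v y" if "y \<in> {u1, u2, u3}" for y
    by (rule orthonormal3_vec_eqI[OF on]) (use eq that in auto)
  have "M *v x = (u1 \<bullet> x) *\<^sub>R (M *v u1) + (u2 \<bullet> x) *\<^sub>R (M *v u2) + (u3 \<bullet> x) *\<^sub>R (M *v u3)"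
    by (subst orthonormal3_expand[OF on, of x])
      (simp add: matrix_vector_right_distrib matrix_vector_mult_scaleR)
  also have "\<dots> = N *v x"
    by (subst (4) orthonormal3_expand[OF on, of x])
      (simp add: on_basis matrix_vector_right_distrib matrix_vector_mult_scaleR)
  finally show "M *v x = N *v x" .
qed

lemma orthonormal3_fixed_imp_identity:
  fixes M :: "real^3^3"
  assumes "orthonormal3 u1 u2 u3" "M *v u1 = u1" "M *v u2 = u2" "M *v u3 = u3"
  shows "M = mat 1"
  using assms by (intro orthonormal3_matrix_eqI) auto

lemma orthonormal3_eigen_inner:
  fixes M :: "real^3^3"
  assumes on: "orthonormal3 u1 u2 u3" and sym: "transpose M = M"
    and ev: "M *v u1 = l1 *\<^sub>R u1" "M *v u2 = l2 *\<^sub>R u2" "M *v u3 = l3 *\<^sub>R u3"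
  shows "x \<bullet> (M *v y) = l1 * (u1 \<bullet> x) * (u1 \<bullet> y) + l2 * (u2 \<bullet> x) * (u2 \<bullet> y)
    + l3 * (u3 \<bullet> x) * (u3 \<bullet> y)"
proof -
  have "u \<bullet> (M *v y) = (M *v u) \<bullet> y" for u by (rule inner_mult_vec_symmetric[OF sym])
  then have "u1 \<bullet> (M *v y) = l1 * (u1 \<bullet> y)" "u2 \<bullet> (M *v y) = l2 * (u2 \<bullet> y)"
    "u3 \<bullet> (M *v y) = l3 * (u3 \<bullet> y)"
    by (simp_all add: ev)
  then show ?thesis using orthonormal3_parseval[OF on, of x "M *v y"] by simp
qed

lemma orthonormal3_eigen_outer:
  fixes M :: "real^3^3"
  assumes on: "orthonormal3 u1 u2 u3"
    and ev: "M *v u1 = l1 *\<^sub>R u1" "M *v u2 = l2 *\<^sub>R u2" "M *v u3 = l3 *\<^sub>R u3"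
  shows "M = l1 *\<^sub>R outer u1 u1 + l2 *\<^sub>R outer u2 u2 + l3 *\<^sub>R outer u3 u3"
proof (rule matrix_eqI)
  fix x
  show "M *v x = (l1 *\<^sub>R outer u1 u1 + l2 *\<^sub>R outer u2 u2 + l3 *\<^sub>R outer u3 u3) *v x"
    by (subst orthonormal3_expand[OF on, of x])
      (simp add: matrix_vector_right_distrib matrix_vector_mult_scaleR ev
        matrix_vector_mult_add_rdistrib scaleR_matrix_vector_assoc[symmetric] outer_mult_vec
        mult.commute)
qed

lemma det_orthonormal3_eigen:
  fixes M :: "real^3^3"
  assumes on: "orthonormal3 u1 u2 u3"
    and ev: "M *v u1 = l1 *\<^sub>R u1" "M *v u2 = l2 *\<^sub>R u2" "M *v u3 = l3 *\<^sub>R u3"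
  shows "det M = l1 * l2 * l3"
proof -
  define V where "V = rows3 u1 u2 u3"
  define D :: "real^3^3" where "D = (\<chi> i j. if i = j then (vector [l1, l2, l3] :: real^3)$i else 0)"
  have "M = transpose V ** D ** V"
  proof (rule matrix_eqI)
    fix x
    have "D *v y = vector [l1 * y$1, l2 * y$2, l3 * y$3]" for y
      unfolding D_def matrix_vector_mult_def by (simp add: vec_eq_iff forall_3 sum_3)
    then show "M *v x = (transpose V ** D ** V) *v x"
      unfolding V_def
      by (subst orthonormal3_expand[OF on, of x])
        (simp add: matrix_vector_right_distrib matrix_vector_mult_scaleR ev
          matrix_vector_mul_assoc[symmetric] rows3_mult_vec transpose_rows3_mult_vec mult.commute
          del: transpose_matrix_vector)
  qed
  moreover have "det V * det V = 1"
    using det_orthogonal_matrix[OF orthogonal_matrix_rows3[OF on]] unfolding V_def by auto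
  moreover have "det D = l1 * l2 * l3"
    unfolding D_def det_3 by simp
  ultimately show ?thesis by (simp add: det_mul algebra_simps)
qed

lemma matrix_mul_transpose_nth:
  fixes X M Y :: "real^'n^'n"
  shows "(X ** M ** transpose Y)$i$j = (X$i) \<bullet> (M *v (Y$j))"
proof -
  have "(X ** M ** transpose Y)$i$j = (\<Sum>k\<in>UNIV. \<Sum>l\<in>UNIV. X$i$l * M$l$k * Y$j$k)"
    unfolding matrix_matrix_mult_def transpose_def by (simp add: sum_distrib_right)
  also have "\<dots> = (X$i) \<bullet> (M *v (Y$j))"
    unfolding matrix_vector_mult_def inner_vec_def
    by (subst sum.swap) (simp add: sum_distrib_left mult.assoc)
  finally show ?thesis .
qed

lemma trace_orthonormal3:
  fixes M :: "real^3^3"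
  assumes on: "orthonormal3 u1 u2 u3"
  shows "trace M = u1 \<bullet> (M *v u1) + u2 \<bullet> (M *v u2) + u3 \<bullet> (M *v u3)"
proof -
  let ?V = "rows3 u1 u2 u3"
  have "transpose ?V ** ?V = mat 1"
    using orthogonal_matrix_rows3[OF on] unfolding orthogonal_matrix_def by simp
  then have "trace M = trace ((M ** transpose ?V) ** ?V)"
    by (simp add: matrix_mul_rid flip: matrix_mul_assoc)
  also have "\<dots> = trace (?V ** (M ** transpose ?V))"
    by (rule trace_mul_sym)
  also have "\<dots> = u1 \<bullet> (M *v u1) + u2 \<bullet> (M *v u2) + u3 \<bullet> (M *v u3)"
    unfolding trace_def sum_3 matrix_mul_assoc matrix_mul_transpose_nth by (simp add: rows3_def)
  finally show ?thesis .
qed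

lemma trace_orthogonal_conj:
  fixes X R :: "real^'n^'n"
  assumes "orthogonal_matrix R"
  shows "trace (R ** X ** transpose R) = trace X"
proof -
  have "trace (R ** X ** transpose R) = trace ((transpose R ** R) ** X)"
    by (subst trace_mul_sym) (simp add: matrix_mul_assoc)
  also have "\<dots> = trace X"
    using assms unfolding orthogonal_matrix_def by (simp add: matrix_mul_lid)
  finally show ?thesis .
qed

section \<open>Spectral theorem for symmetric matrices\<close>

lemma rayleigh_max_exists:
  fixes M :: "real^'n^'n" and S :: "(real^'n) set"
  assumes S: "subspace S" and x0: "x0 \<in> S" "x0 \<noteq> 0"
  obtains x where "x \<in> S" "norm x = 1" "\<forall>y\<in>S. y \<bullet> (M *v y) \<le> (x \<bullet> (M *v x)) * (y \<bullet> y)"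
proof -
  let ?K = "S \<inter> sphere 0 1"
  have "compact ?K"
    by (simp add: S closed_subspace compact_Int_closed compact_sphere Int_commute closed_Int_compact)
  moreover have "(1 / norm x0) *\<^sub>R x0 \<in> ?K"
    using x0 S by (simp add: subspace_scale)
  then have "?K \<noteq> {}" by blast
  moreover have "continuous_on ?K (\<lambda>y. y \<bullet> (M *v y))"
    by (intro continuous_intros)
  ultimately obtain x where xK: "x \<in> ?K" and xmax: "\<forall>y\<in>?K. y \<bullet> (M *v y) \<le> x \<bullet> (M *v x)"
    using continuous_attains_sup by blast
  have "y \<bullet> (M *v y) \<le> (x \<bullet> (M *v x)) * (y \<bullet> y)" if y: "y \<in> S" for y
  proof (cases "y = 0")
    case False
    let ?c = "1 / norm y"
    have "?c *\<^sub>R y \<in> ?K" using y False S by (simp add: subspace_scale)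
    with xmax have "(?c *\<^sub>R y) \<bullet> (M *v (?c *\<^sub>R y)) \<le> x \<bullet> (M *v x)" by blast
    then have "?c^2 * (y \<bullet> (M *v y)) \<le> x \<bullet> (M *v x)"
      by (simp add: matrix_vector_mult_scaleR power2_eq_square)
    then have "?c^2 * (y \<bullet> (M *v y)) * (norm y)^2 \<le> (x \<bullet> (M *v x)) * (norm y)^2"
      by (simp add: mult_right_mono)
    moreover have "?c^2 * (y \<bullet> (M *v y)) * (norm y)^2 = y \<bullet> (M *v y)"
      using False by (simp add: field_simps)
    ultimately show ?thesis by (simp only: power2_norm_eq_inner)
  qed simp
  then show ?thesis using that xK by auto
qed

lemma linear_le_quadratic_imp_zero:
  fixes c d :: real
  assumes le: "\<And>t. 2 * t * c \<le> t^2 * d" and "d \<ge> 0"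
  shows "c = 0"
proof -
  define u where "u = d + 1"
  have u: "u > 0" using \<open>d \<ge> 0\<close> unfolding u_def by simp
  have "2 * (c / u) * c = (2 * c^2 * u) / u^2"
    using u by (simp add: power2_eq_square field_simps)
  moreover have "(c / u)^2 * d = (c^2 * d) / u^2" by (simp add: power_divide)
  ultimately have "(2 * c^2 * u) / u^2 \<le> (c^2 * d) / u^2" using le[of "c / u"] by simp
  then have "2 * c^2 * u \<le> c^2 * d" using u by (simp add: divide_le_cancel)
  then have "c^2 * (d + 2) \<le> 0" unfolding u_def by (simp add: algebra_simps)
  then have "c^2 \<le> 0" using \<open>d \<ge> 0\<close> by (simp add: mult_le_0_iff)
  then show ?thesis by simp
qed

lemma rayleigh_max_stationary:
  fixes M :: "real^'n^'n"
  assumes sym: "transpose M = M" and S: "subspace S" and x: "x \<in> S" "norm x = 1"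
    and xmax: "\<forall>y\<in>S. y \<bullet> (M *v y) \<le> (x \<bullet> (M *v x)) * (y \<bullet> y)"
    and y: "y \<in> S"
  shows "y \<bullet> (M *v x - (x \<bullet> (M *v x)) *\<^sub>R x) = 0"
proof -
  let ?l = "x \<bullet> (M *v x)"
  have xx: "x \<bullet> x = 1" using x by (simp add: dot_square_norm)
  have swap: "x \<bullet> (M *v y) = y \<bullet> (M *v x)"
    using inner_mult_vec_symmetric[OF sym, of x y] by (simp add: inner_commute)
  have "2 * t * (y \<bullet> (M *v x) - ?l * (x \<bullet> y)) \<le> t^2 * (?l * (y \<bullet> y) - y \<bullet> (M *v y))" for t
  proof -
    have "x + t *\<^sub>R y \<in> S" using S x y by (simp add: subspace_add subspace_scale)
    with xmax have "(x + t *\<^sub>R y) \<bullet> (M *v (x + t *\<^sub>R y)) \<le> ?l * ((x + t *\<^sub>R y) \<bullet> (x + t *\<^sub>R y))"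
      by blast
    then show ?thesis
      by (simp add: matrix_vector_right_distrib matrix_vector_mult_scaleR inner_add_left
          inner_add_right swap xx inner_commute[of y x] power2_eq_square algebra_simps)
  qed
  moreover have "?l * (y \<bullet> y) - y \<bullet> (M *v y) \<ge> 0" using xmax y by auto
  ultimately have "y \<bullet> (M *v x) - ?l * (x \<bullet> y) = 0" by (rule linear_le_quadratic_imp_zero)
  then show ?thesis by (simp add: inner_diff_right inner_commute)
qed

lemma rayleigh_max_eigenvector:
  fixes M :: "real^'n^'n"
  assumes sym: "transpose M = M" and S: "subspace S" and x0: "x0 \<in> S" "x0 \<noteq> 0"
    and invariant: "\<And>y. y \<in> S \<Longrightarrow> M *v y \<in> S"
  obtains x where "x \<in> S" "norm x = 1" "M *v x = (x \<bullet> (M *v x)) *\<^sub>R x"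
    "\<forall>y\<in>S. y \<bullet> (M *v y) \<le> (x \<bullet> (M *v x)) * (y \<bullet> y)"
proof -
  obtain x where x: "x \<in> S" "norm x = 1"
    and xmax: "\<forall>y\<in>S. y \<bullet> (M *v y) \<le> (x \<bullet> (M *v x)) * (y \<bullet> y)"
    using rayleigh_max_exists[OF S x0] by blast
  let ?v = "M *v x - (x \<bullet> (M *v x)) *\<^sub>R x"
  have "?v \<in> S" using invariant[OF x(1)] x(1) S by (simp add: subspace_diff subspace_scale)
  then have "?v \<bullet> ?v = 0" using rayleigh_max_stationary[OF sym S x xmax] by blast
  then show ?thesis using that x xmax by simp
qed

lemma exists_orthogonal_nonzero3:
  fixes S :: "(real^3) set"
  assumes "finite S" "card S \<le> 2"
  obtains x where "x \<noteq> 0" "\<And>y. y \<in> S \<Longrightarrow> y \<bullet> x = 0"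
proof -
  have "dim S < DIM(real^3)" using assms dim_le_card'[of S] by simp
  then obtain x where "x \<noteq> 0" "\<And>y. y \<in> span S \<Longrightarrow> orthogonal x y"
    using orthogonal_to_subspace_exists by blast
  then show ?thesis using that by (simp add: orthogonal_def span_base inner_commute)
qed

lemma rayleigh_max_eigenvector_orthogonal3:
  fixes M :: "real^3^3"
  assumes sym: "transpose M = M" and F: "finite F" "card F \<le> 2"
    and eigen: "\<And>u. u \<in> F \<Longrightarrow> \<exists>l. M *v u = l *\<^sub>R u"
  obtains x where "\<forall>u\<in>F. u \<bullet> x = 0" "norm x = 1" "M *v x = (x \<bullet> (M *v x)) *\<^sub>R x"
    "\<forall>y. (\<forall>u\<in>F. u \<bullet> y = 0) \<longrightarrow> y \<bullet> (M *v y) \<le> (x \<bullet> (M *v x)) * (y \<bullet> y)"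
proof -
  define S where "S = {y. \<forall>u\<in>F. u \<bullet> y = 0}"
  have S: "subspace S" unfolding S_def subspace_def by (simp add: inner_add_right)
  obtain x0 where "x0 \<noteq> 0" "\<And>y. y \<in> F \<Longrightarrow> y \<bullet> x0 = 0"
    using exists_orthogonal_nonzero3[OF F] by metis
  then have x0: "x0 \<noteq> 0" "x0 \<in> S" unfolding S_def by auto
  have invariant: "M *v y \<in> S" if y: "y \<in> S" for y
  proof -
    have "u \<bullet> (M *v y) = 0" if u: "u \<in> F" for u
    proof -
      obtain l where "M *v u = l *\<^sub>R u" using eigen[OF u] by blast
      then have "u \<bullet> (M *v y) = l * (u \<bullet> y)" using inner_mult_vec_symmetric[OF sym, of u y] by simp
      then show ?thesis using y u unfolding S_def by simp
    qed
    then show ?thesis unfolding S_def by simp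
  qed
  obtain x where x: "x \<in> S" "norm x = 1" "M *v x = (x \<bullet> (M *v x)) *\<^sub>R x"
    and xmax: "\<forall>y\<in>S. y \<bullet> (M *v y) \<le> (x \<bullet> (M *v x)) * (y \<bullet> y)"
    by (rule rayleigh_max_eigenvector[OF sym S x0(2,1) invariant])
  show ?thesis
  proof (rule that)
    show "\<forall>u\<in>F. u \<bullet> x = 0" using x(1) unfolding S_def by simp
    show "\<forall>y. (\<forall>u\<in>F. u \<bullet> y = 0) \<longrightarrow> y \<bullet> (M *v y) \<le> (x \<bullet> (M *v x)) * (y \<bullet> y)"
      using xmax unfolding S_def by simp
  qed (use x in auto)
qed

text \<open>Each eigenvector maximises the Rayleigh quotient on the orthogonal complement of the previous
  ones, which yields the ordering of the eigenvalues.\<close>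

lemma symmetric_orthonormal3_eigenbasis:
  fixes M :: "real^3^3"
  assumes sym: "transpose M = M"
  obtains u1 u2 u3 l1 l2 l3 where "orthonormal3 u1 u2 u3"
    "M *v u1 = l1 *\<^sub>R u1" "M *v u2 = l2 *\<^sub>R u2" "M *v u3 = l3 *\<^sub>R u3"
    "l1 \<le> l2" "l2 \<le> l3"
proof -
  obtain u3 where u3: "norm u3 = 1" "M *v u3 = (u3 \<bullet> (M *v u3)) *\<^sub>R u3"
    and max3: "\<forall>y. y \<bullet> (M *v y) \<le> (u3 \<bullet> (M *v u3)) * (y \<bullet> y)"
    by (rule rayleigh_max_eigenvector_orthogonal3[OF sym, of "{}"]) simp_all
  obtain u2 where u2: "u3 \<bullet> u2 = 0" "norm u2 = 1" "M *v u2 = (u2 \<bullet> (M *v u2)) *\<^sub>R u2"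
    and max2: "\<forall>y. u3 \<bullet> y = 0 \<longrightarrow> y \<bullet> (M *v y) \<le> (u2 \<bullet> (M *v u2)) * (y \<bullet> y)"
    by (rule rayleigh_max_eigenvector_orthogonal3[OF sym, of "{u3}"]) (use u3(2) in auto)
  obtain u1 where u1: "u3 \<bullet> u1 = 0" "u2 \<bullet> u1 = 0" "norm u1 = 1" "M *v u1 = (u1 \<bullet> (M *v u1)) *\<^sub>R u1"
    by (rule rayleigh_max_eigenvector_orthogonal3[OF sym, of "{u3, u2}"])
      (use u3(2) u2(3) in \<open>auto simp: card_insert_if\<close>)
  have "orthonormal3 u1 u2 u3"
    using u1 u2 u3 unfolding orthonormal3_def by (simp add: dot_square_norm inner_commute)
  moreover have "u2 \<bullet> (M *v u2) \<le> u3 \<bullet> (M *v u3)"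
    using max3[rule_format, of u2] u2(2) by (simp add: dot_square_norm)
  moreover have "u1 \<bullet> (M *v u1) \<le> u2 \<bullet> (M *v u2)"
    using max2[rule_format, of u1] u1 by (simp add: dot_square_norm)
  ultimately show ?thesis using that u1(4) u2(3) u3(2) by blast
qed

lemma eigenvectors_orthogonal:
  fixes M :: "real^'n^'n"
  assumes "transpose M = M" "M *v u = a *\<^sub>R u" "M *v w = b *\<^sub>R w" "a \<noteq> b"
  shows "u \<bullet> w = 0"
proof -
  have "(a - b) * (u \<bullet> w) = 0"
    using inner_mult_vec_symmetric[OF assms(1), of u w] assms(2,3) by (auto simp: algebra_simps)
  then show ?thesis using assms(4) by simp
qed

lemma refl_mat_mult_vec: "refl_mat e *v x = (2 * (e \<bullet> x)) *\<^sub>R e - x"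
  unfolding refl_mat_def
  by (simp add: matrix_vector_mult_diff_rdistrib outer_mult_vec scaleR_matrix_vector_assoc[symmetric])

lemma transpose_refl_mat: "transpose (refl_mat e) = refl_mat e"
proof -
  have "transpose (- A + c *\<^sub>R B) = - transpose A + c *\<^sub>R transpose B" for A B :: "real^3^3" and c
    by (simp add: transpose_def vec_eq_iff)
  then show ?thesis unfolding refl_mat_def by (simp add: transpose_outer)
qed

lemma refl_mat_involution:
  assumes "norm e = 1"
  shows "refl_mat e ** refl_mat e = mat 1"
proof (rule matrix_eqI)
  fix x
  have "e \<bullet> e = 1" using assms by (simp add: dot_square_norm)
  then show "(refl_mat e ** refl_mat e) *v x = mat 1 *v x"
    by (simp add: matrix_vector_mul_assoc[symmetric] refl_mat_mult_vec inner_diff_right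
        scaleR_diff_right)
qed

lemma orthogonal_refl_mat: "norm e = 1 \<Longrightarrow> orthogonal_matrix (refl_mat e)"
  unfolding orthogonal_matrix_def transpose_refl_mat using refl_mat_involution by simp

lemma det_refl_mat:
  assumes "norm e = 1"
  shows "det (refl_mat e) = 1"
proof -
  have "e \<bullet> e = 1" using assms by (simp add: dot_square_norm)
  then have "e$1 * e$1 + e$2 * e$2 + e$3 * e$3 = 1" by (simp add: inner_vec_def sum_3)
  then show ?thesis
    unfolding refl_mat_def det_3 outer_def by (simp add: mat_def) algebra
qed

lemma in_SO3_refl_mat: "norm e = 1 \<Longrightarrow> in_SO3 (refl_mat e)"
  unfolding in_SO3_def using orthogonal_refl_mat det_refl_mat by blast

lemma refl_mat_uminus: "refl_mat (- e) = refl_mat e"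
  unfolding refl_mat_def outer_def by simp

lemma sym_posdef_symmetric: "sym_posdef A \<Longrightarrow> transpose A = A"
  unfolding sym_posdef_def by simp

lemma sym_posdef_pos: "sym_posdef A \<Longrightarrow> x \<noteq> 0 \<Longrightarrow> x \<bullet> (A *v x) > 0"
  unfolding sym_posdef_def by blast

lemma sym_posdef_eq_0: "sym_posdef A \<Longrightarrow> A *v x = 0 \<Longrightarrow> x = 0"
  unfolding sym_posdef_def by force

lemma sym_posdef_matrix_inv:
  assumes "sym_posdef A"
  shows "A ** matrix_inv A = mat 1" "matrix_inv A ** A = mat 1"
proof -
  have "invertible A"
    using matrix_left_invertible_ker sym_posdef_eq_0[OF assms] invertible_left_inverse by blast
  then have "A ** matrix_inv A = mat 1 \<and> matrix_inv A ** A = mat 1"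
    unfolding invertible_def matrix_inv_def by (rule someI_ex)
  then show "A ** matrix_inv A = mat 1" "matrix_inv A ** A = mat 1" by auto
qed

lemma sym_posdef_matrix_inv_mult_vec:
  assumes "sym_posdef A"
  shows "A *v (matrix_inv A *v x) = x" "matrix_inv A *v (A *v x) = x"
  using sym_posdef_matrix_inv[OF assms] by (simp_all add: matrix_vector_mul_assoc)

lemma transpose_matrix_inv_sym_posdef:
  assumes "sym_posdef A"
  shows "transpose (matrix_inv A) = matrix_inv A"
proof -
  have "transpose (matrix_inv A) ** A = mat 1"
    using arg_cong[OF sym_posdef_matrix_inv(1)[OF assms], of transpose] sym_posdef_symmetric[OF assms]
    by (simp add: matrix_transpose_mul)
  then have "transpose (matrix_inv A) ** (A ** matrix_inv A) = matrix_inv A"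
    by (simp add: matrix_mul_assoc matrix_mul_lid)
  then show ?thesis using sym_posdef_matrix_inv(1)[OF assms] by (simp add: matrix_mul_rid)
qed

text \<open>Uniqueness of positive definite square roots: an eigenvector \<open>v\<close> of \<open>X - Y\<close> with eigenvalue
  \<open>l\<close> satisfies \<open>0 = v \<bullet> (X\<^sup>2 - Y\<^sup>2) v = l (v \<bullet> X v + v \<bullet> Y v)\<close>.\<close>

lemma sym_posdef_square_eq:
  assumes X: "sym_posdef X" and Y: "sym_posdef Y" and eq: "X ** X = Y ** Y"
  shows "X = Y"
proof -
  define D where "D = X - Y"
  have symD: "transpose D = D"
  proof -
    have "transpose (X - Y) = transpose X - transpose Y" by (simp add: transpose_def vec_eq_iff)
    then show ?thesis unfolding D_def using X Y by (simp add: sym_posdef_symmetric)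
  qed
  have zero: "D *v v = 0" if v: "norm v = 1" "D *v v = l *\<^sub>R v" for v l
  proof -
    have "v \<noteq> 0" using v by auto
    have "X *v (X *v v) = Y *v (Y *v v)"
      using eq by (simp add: matrix_vector_mul_assoc)
    then have "X *v (D *v v) + D *v (Y *v v) = 0"
      unfolding D_def by (simp add: matrix_vector_mult_diff_rdistrib matrix_vector_mult_diff_distrib)
    then have "v \<bullet> (X *v (D *v v)) + (D *v v) \<bullet> (Y *v v) = 0"
      by (metis inner_add_right inner_mult_vec_symmetric[OF symD] inner_zero_right)
    then have "l * (v \<bullet> (X *v v) + v \<bullet> (Y *v v)) = 0"
      using v(2) by (simp add: matrix_vector_mult_scaleR algebra_simps)
    moreover have "v \<bullet> (X *v v) + v \<bullet> (Y *v v) > 0"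
      using sym_posdef_pos[OF X \<open>v \<noteq> 0\<close>] sym_posdef_pos[OF Y \<open>v \<noteq> 0\<close>] by simp
    ultimately show ?thesis using v(2) by simp
  qed
  obtain u1 u2 u3 l1 l2 l3 where on: "orthonormal3 u1 u2 u3"
    and ev: "D *v u1 = l1 *\<^sub>R u1" "D *v u2 = l2 *\<^sub>R u2" "D *v u3 = l3 *\<^sub>R u3"
    using symmetric_orthonormal3_eigenbasis[OF symD] by metis
  have "norm u1 = 1" "norm u2 = 1" "norm u3 = 1"
    using orthonormal3_inner[OF on] by (simp_all add: norm_eq_1)
  then have "D *v u1 = 0" "D *v u2 = 0" "D *v u3 = 0"
    using zero ev by blast+
  then have "D = 0"
    by (intro orthonormal3_matrix_eqI[OF on]) auto
  then show ?thesis unfolding D_def by simp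
qed

lemma sym_posdef_refl_conj:
  assumes A: "sym_posdef A" and e: "norm e = 1"
  shows "sym_posdef (refl_mat e ** A ** refl_mat e)"
  unfolding sym_posdef_def
proof (intro conjI allI impI)
  show "transpose (refl_mat e ** A ** refl_mat e) = refl_mat e ** A ** refl_mat e"
    using sym_posdef_symmetric[OF A]
    by (simp add: matrix_transpose_mul transpose_refl_mat matrix_mul_assoc)
  fix x :: "real^3" assume "x \<noteq> 0"
  have PP: "refl_mat e *v (refl_mat e *v x) = x"
    using refl_mat_involution[OF e] by (simp add: matrix_vector_mul_assoc)
  with \<open>x \<noteq> 0\<close> have "refl_mat e *v x \<noteq> 0" by auto
  then have "(refl_mat e *v x) \<bullet> (A *v (refl_mat e *v x)) > 0" by (rule sym_posdef_pos[OF A])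
  then show "x \<bullet> ((refl_mat e ** A ** refl_mat e) *v x) > 0"
    by (simp add: matrix_vector_mul_assoc[symmetric] inner_mult_vec_symmetric[OF transpose_refl_mat])
qed

section \<open>The twinning tensor\<close>

text \<open>If \<open>Q B - A = a \<otimes> n\<close>, then \<open>Q B A\<^sup>-\<^sup>1 = I + a \<otimes> A\<^sup>-\<^sup>1 n\<close> and \<open>A\<^sup>-\<^sup>1 B\<^sup>2 A\<^sup>-\<^sup>1\<close> is the
  Cauchy--Green tensor \<open>(Q B A\<^sup>-\<^sup>1)\<^sup>T (Q B A\<^sup>-\<^sup>1)\<close> of this shear-like map.\<close>

definition twin_tensor :: "real^3^3 \<Rightarrow> real^3^3 \<Rightarrow> real^3^3" where
  "twin_tensor A B = matrix_inv A ** (B ** B) ** matrix_inv A"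

lemma inner_twin_tensor:
  assumes A: "sym_posdef A" and B: "sym_posdef B"
  shows "x \<bullet> (twin_tensor A B *v y) = (B *v (matrix_inv A *v x)) \<bullet> (B *v (matrix_inv A *v y))"
proof -
  have "x \<bullet> (twin_tensor A B *v y) = x \<bullet> (matrix_inv A *v (B *v (B *v (matrix_inv A *v y))))"
    unfolding twin_tensor_def by (simp add: matrix_vector_mul_assoc[symmetric])
  also have "\<dots> = (B *v (matrix_inv A *v x)) \<bullet> (B *v (matrix_inv A *v y))"
    by (simp add: inner_mult_vec_symmetric transpose_matrix_inv_sym_posdef[OF A]
        sym_posdef_symmetric[OF B])
  finally show ?thesis .
qed

lemma transpose_twin_tensor:
  assumes "sym_posdef A" "sym_posdef B"
  shows "transpose (twin_tensor A B) = twin_tensor A B"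
  unfolding twin_tensor_def
  using transpose_matrix_inv_sym_posdef[OF assms(1)] sym_posdef_symmetric[OF assms(2)]
  by (simp add: matrix_transpose_mul matrix_mul_assoc)

lemma twin_tensor_pos:
  assumes A: "sym_posdef A" and B: "sym_posdef B" and "x \<noteq> 0"
  shows "x \<bullet> (twin_tensor A B *v x) > 0"
proof -
  have "matrix_inv A *v x \<noteq> 0"
    using sym_posdef_matrix_inv_mult_vec(1)[OF A, of x] \<open>x \<noteq> 0\<close> by auto
  then have "B *v (matrix_inv A *v x) \<noteq> 0" using sym_posdef_eq_0[OF B] by blast
  then show ?thesis unfolding inner_twin_tensor[OF A B] by simp
qed

lemma twin_tensor_conj:
  assumes "sym_posdef A"
  shows "A ** twin_tensor A B ** A = B ** B"
proof -
  have "A ** twin_tensor A B ** A = (A ** matrix_inv A) ** (B ** B) ** (matrix_inv A ** A)"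
    unfolding twin_tensor_def by (simp add: matrix_mul_assoc)
  then show ?thesis using sym_posdef_matrix_inv[OF assms] by (simp add: matrix_mul_lid matrix_mul_rid)
qed

lemma twin_tensor_self: "sym_posdef A \<Longrightarrow> twin_tensor A A = mat 1"
  using twin_tensor_conj[of A A] sym_posdef_matrix_inv[of A]
  by (metis matrix_mul_assoc matrix_mul_lid matrix_mul_rid)

lemma twin_tensor_eq_imp_eq:
  assumes A: "sym_posdef A" and B: "sym_posdef B" and B': "sym_posdef B'"
    and "twin_tensor A B = twin_tensor A B'"
  shows "B = B'"
  using sym_posdef_square_eq[OF B B'] twin_tensor_conj[OF A, of B] twin_tensor_conj[OF A, of B'] assms(4)
  by simp

lemma det_twin_tensor:
  assumes A: "sym_posdef A" and R: "in_O3 R" and BR: "B = R ** A ** transpose R"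
  shows "det (twin_tensor A B) = 1"
proof -
  have "det R * det R = 1"
    using det_orthogonal_matrix R unfolding in_O3_def by (metis mult_minus_left mult_1 minus_minus)
  then have "det B = det A" unfolding BR by (simp add: det_mul algebra_simps)
  moreover have "det (matrix_inv A) * det A = 1"
    using arg_cong[OF sym_posdef_matrix_inv(2)[OF A], of det] by (simp add: det_mul)
  ultimately show ?thesis
    unfolding twin_tensor_def by (simp add: det_mul algebra_simps)
qed

section \<open>Rank-one connections from reflections\<close>

text \<open>With \<open>P = refl_mat e\<close>, \<open>u\<close> the unit vector along \<open>A\<^sup>-\<^sup>1 e\<close> and \<open>Q = refl_mat u ** P\<close>, the map
  \<open>Q (P A P) - A = refl_mat u ** A ** P - A\<close> vanishes on \<open>e\<^sup>\<bottom>\<close>.\<close>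

lemma rank_one_connected_refl_conj:
  assumes A: "sym_posdef A" and e: "norm e = 1"
  shows "rank_one_connected A (refl_mat e ** A ** refl_mat e)"
proof -
  define p where "p = matrix_inv A *v e"
  have Ap: "A *v p = e" unfolding p_def using sym_posdef_matrix_inv_mult_vec[OF A] by simp
  have "p \<noteq> 0" using Ap e by auto
  define u where "u = (1 / norm p) *\<^sub>R p"
  have u: "norm u = 1" unfolding u_def using \<open>p \<noteq> 0\<close> by simp
  define a where "a = (2 / (norm p)^2) *\<^sub>R p - 2 *\<^sub>R (A *v e)"
  have uA: "u \<bullet> (A *v x) = (e \<bullet> x) / norm p" for x
    unfolding u_def using Ap
    by (simp add: inner_mult_vec_symmetric[OF sym_posdef_symmetric[OF A]] matrix_vector_mult_scaleR)
  have "refl_mat u ** refl_mat e ** refl_mat e = refl_mat u"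
    using refl_mat_involution[OF e] by (simp add: matrix_mul_rid flip: matrix_mul_assoc)
  then have "refl_mat u ** refl_mat e ** (refl_mat e ** A ** refl_mat e) = refl_mat u ** A ** refl_mat e"
    by (simp add: matrix_mul_assoc)
  moreover have "refl_mat u ** A ** refl_mat e - A = outer a e"
  proof (rule matrix_eqI)
    fix x
    have Ax: "A *v (refl_mat e *v x) = (2 * (e \<bullet> x)) *\<^sub>R (A *v e) - A *v x"
      by (simp add: refl_mat_mult_vec matrix_vector_mult_diff_distrib matrix_vector_mult_scaleR)
    have "u \<bullet> (A *v (refl_mat e *v x)) = (e \<bullet> x) / norm p"
      unfolding Ax using uA[of e] uA[of x] e by (simp add: inner_diff_right field_simps norm_eq_1)
    then have "refl_mat u *v (A *v (refl_mat e *v x)) - A *v x = (e \<bullet> x) *\<^sub>R a"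
      unfolding refl_mat_mult_vec[of u] Ax unfolding u_def a_def
      by (simp add: algebra_simps power2_eq_square)
    then show "(refl_mat u ** A ** refl_mat e - A) *v x = outer a e *v x"
      by (simp add: outer_mult_vec matrix_vector_mult_diff_rdistrib matrix_vector_mul_assoc[symmetric])
  qed
  moreover have "in_SO3 (refl_mat u ** refl_mat e)"
    using in_SO3_refl_mat[OF u] in_SO3_refl_mat[OF e]
    unfolding in_SO3_def by (simp add: orthogonal_matrix_mul det_mul)
  ultimately show ?thesis unfolding rank_one_connected_def by metis
qed

section \<open>Eigenvalues of the twinning tensor\<close>

text \<open>On the plane \<open>(A\<^sup>-\<^sup>1 n)\<^sup>\<bottom>\<close> the map \<open>Q B A\<^sup>-\<^sup>1\<close> is the identity, so there the quadratic form
  of the twinning tensor is the Euclidean one.\<close>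

lemma rank_one_connected_twin_tensor_plane:
  assumes A: "sym_posdef A" and B: "sym_posdef B" and "rank_one_connected A B"
  obtains m where "\<And>x. m \<bullet> x = 0 \<Longrightarrow> x \<bullet> (twin_tensor A B *v x) = x \<bullet> x"
proof -
  obtain Q a n where Q: "in_SO3 Q" and eq: "Q ** B - A = outer a n"
    using assms(3) unfolding rank_one_connected_def by blast
  have "x \<bullet> (twin_tensor A B *v x) = x \<bullet> x" if "(matrix_inv A *v n) \<bullet> x = 0" for x
  proof -
    define y where "y = matrix_inv A *v x"
    have "n \<bullet> y = 0"
      using that unfolding y_def
      by (simp add: inner_mult_vec_symmetric[OF transpose_matrix_inv_sym_posdef[OF A]])
    then have "(Q ** B - A) *v y = 0" unfolding eq by (simp add: outer_mult_vec)
    then have "Q *v (B *v y) - A *v y = 0"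
      by (simp add: matrix_vector_mult_diff_rdistrib matrix_vector_mul_assoc)
    then have "Q *v (B *v y) = x"
      unfolding y_def using sym_posdef_matrix_inv_mult_vec(1)[OF A] by simp
    then have "(B *v y) \<bullet> (B *v y) = x \<bullet> x"
      using orthogonal_matrix_inner[of Q "B *v y" "B *v y"] Q unfolding in_SO3_def by simp
    then show ?thesis unfolding inner_twin_tensor[OF A B] y_def .
  qed
  then show ?thesis using that by blast
qed

lemma eigenplane_quadratic_form_ne:
  fixes C :: "real^3^3"
  assumes "u \<bullet> u = 1" "v \<bullet> v = 1" "u \<bullet> v = 0" "C *v u = a *\<^sub>R u" "C *v v = b *\<^sub>R v"
    and same_side: "(a - 1) * (b - 1) > 0"
  obtains x where "m \<bullet> x = 0" "x \<bullet> (C *v x) \<noteq> x \<bullet> x"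
proof -
  obtain c1 c2 where c: "c1 \<noteq> 0 \<or> c2 \<noteq> 0" "m \<bullet> (c1 *\<^sub>R u + c2 *\<^sub>R v) = 0"
  proof (cases "m \<bullet> u = 0")
    case True
    then show ?thesis using that[of 1 0] by simp
  next
    case False
    then show ?thesis using that[of "m \<bullet> v" "- (m \<bullet> u)"] by (simp add: inner_diff_right mult.commute)
  qed
  define x where "x = c1 *\<^sub>R u + c2 *\<^sub>R v"
  have "x \<bullet> (C *v x) - x \<bullet> x = (a - 1) * c1^2 + (b - 1) * c2^2"
    unfolding x_def using assms(1-5)
    by (simp add: matrix_vector_right_distrib matrix_vector_mult_scaleR inner_add_left
        inner_add_right inner_commute[of v u] power2_eq_square algebra_simps)
  moreover have "(a - 1) * ((a - 1) * c1^2 + (b - 1) * c2^2) > 0"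
  proof -
    have "(a - 1) * ((a - 1) * c1^2 + (b - 1) * c2^2) = ((a - 1) * c1)^2 + ((a - 1) * (b - 1)) * c2^2"
      by (simp add: power2_eq_square algebra_simps)
    moreover have "a - 1 \<noteq> 0" using same_side by auto
    ultimately show ?thesis
      using c(1) same_side by (auto intro: add_pos_nonneg add_nonneg_pos)
  qed
  ultimately show ?thesis using that[of x] c(2) unfolding x_def by force
qed

lemma middle_eigenvalue_eq_1:
  fixes C :: "real^3^3"
  assumes on: "orthonormal3 u1 u2 u3"
    and ev: "C *v u1 = l1 *\<^sub>R u1" "C *v u2 = l2 *\<^sub>R u2" "C *v u3 = l3 *\<^sub>R u3"
    and ord: "l1 \<le> l2" "l2 \<le> l3"
    and plane: "\<And>x. m \<bullet> x = 0 \<Longrightarrow> x \<bullet> (C *v x) = x \<bullet> x"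
  shows "l2 = 1"
proof (rule ccontr)
  note o = orthonormal3_inner[OF on]
  assume "l2 \<noteq> 1"
  then consider "l2 < 1" | "l2 > 1" by linarith
  then show False
  proof cases
    case 1
    then have "(l1 - 1) * (l2 - 1) > 0" using ord by (intro mult_neg_neg) auto
    then show False
      using eigenplane_quadratic_form_ne[OF o(1,2,4) ev(1,2)] plane by metis
  next
    case 2
    then have "(l2 - 1) * (l3 - 1) > 0" using ord by simp
    then show False
      using eigenplane_quadratic_form_ne[OF o(2,3,6) ev(2,3)] plane by metis
  qed
qed

lemma rank_one_connected_twin_eigenbasis:
  assumes A: "sym_posdef A" and B: "sym_posdef B" and R: "in_O3 R"
    and BR: "B = R ** A ** transpose R" and rank_one: "rank_one_connected A B"
  obtains u1 u2 u3 l1 l3 where "orthonormal3 u1 u2 u3"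
    "twin_tensor A B *v u1 = l1 *\<^sub>R u1" "twin_tensor A B *v u2 = u2"
    "twin_tensor A B *v u3 = l3 *\<^sub>R u3"
    "0 < l1" "l1 \<le> 1" "1 \<le> l3" "l1 * l3 = 1"
proof -
  obtain u1 u2 u3 l1 l2 l3 where on: "orthonormal3 u1 u2 u3"
    and ev: "twin_tensor A B *v u1 = l1 *\<^sub>R u1" "twin_tensor A B *v u2 = l2 *\<^sub>R u2"
      "twin_tensor A B *v u3 = l3 *\<^sub>R u3"
    and ord: "l1 \<le> l2" "l2 \<le> l3"
    using symmetric_orthonormal3_eigenbasis[OF transpose_twin_tensor[OF A B]] by metis
  have "u1 \<noteq> 0" using orthonormal3_inner(1)[OF on] by auto
  then have "l1 > 0"
    using twin_tensor_pos[OF A B, of u1] ev(1) orthonormal3_inner(1)[OF on] by simp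
  obtain m where "\<And>x. m \<bullet> x = 0 \<Longrightarrow> x \<bullet> (twin_tensor A B *v x) = x \<bullet> x"
    using rank_one_connected_twin_tensor_plane[OF A B rank_one] by blast
  then have "l2 = 1" by (rule middle_eigenvalue_eq_1[OF on ev ord])
  moreover have "l1 * l2 * l3 = 1"
    using det_orthonormal3_eigen[OF on ev] det_twin_tensor[OF A R BR] by simp
  ultimately show ?thesis using that[OF on ev(1) _ ev(3) \<open>l1 > 0\<close>] ev(2) ord by simp
qed

lemma twin_tensor_eq_identity_imp_eq:
  assumes "sym_posdef A" "sym_posdef B" "twin_tensor A B = mat 1"
  shows "B = A"
  using twin_tensor_eq_imp_eq[OF assms(1,2,1)] twin_tensor_self[OF assms(1)] assms(3) by simp

lemma refl_conj_eigenvector: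
  fixes A :: "real^3^3"
  assumes sym: "transpose A = A" and ev: "A *v e = c *\<^sub>R e" and e: "norm e = 1"
  shows "refl_mat e ** A ** refl_mat e = A"
proof (rule matrix_eqI)
  fix x
  have ee: "e \<bullet> e = 1" using e by (simp add: dot_square_norm)
  have eA: "e \<bullet> (A *v y) = c * (e \<bullet> y)" for y
    using inner_mult_vec_symmetric[OF sym, of e y] ev by simp
  have APx: "A *v (refl_mat e *v x) = (2 * (e \<bullet> x) * c) *\<^sub>R e - A *v x"
    by (simp add: refl_mat_mult_vec matrix_vector_mult_diff_distrib matrix_vector_mult_scaleR ev)
  have "e \<bullet> (A *v (refl_mat e *v x)) = c * (e \<bullet> x)"
    unfolding APx using ee eA[of x] by (simp add: inner_diff_right algebra_simps)
  then have "refl_mat e *v (A *v (refl_mat e *v x)) = (2 * (c * (e \<bullet> x))) *\<^sub>R e - A *v (refl_mat e *v x)"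
    by (simp only: refl_mat_mult_vec[of e "A *v (refl_mat e *v x)"])
  also have "\<dots> = A *v x" unfolding APx by (simp add: mult_ac)
  finally show "(refl_mat e ** A ** refl_mat e) *v x = A *v x"
    by (simp add: matrix_vector_mul_assoc[symmetric])
qed

lemma exists_eigenvector_star_cond:
  assumes A: "sym_posdef A"
  shows "\<exists>e c. norm e = 1 \<and> A *v e = c *\<^sub>R e \<and> star_cond A A e"
proof -
  obtain e e2 e3 c l2 l3 where on: "orthonormal3 e e2 e3" and ev: "A *v e = c *\<^sub>R e"
    using symmetric_orthonormal3_eigenbasis[OF sym_posdef_symmetric[OF A]] by metis
  have "norm e = 1" using orthonormal3_inner(1)[OF on] by (simp add: norm_eq_1)
  then show ?thesis
    using refl_conj_eigenvector[OF sym_posdef_symmetric[OF A] ev] ev unfolding star_cond_def by auto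
qed

lemma exists_orthonormal3_balanced:
  fixes G :: "real^3^3"
  assumes symG: "transpose G = G"
  obtains e1 e2 e3 where "orthonormal3 e1 e2 e3" "e1 \<bullet> (G *v e1) = e3 \<bullet> (G *v e3)"
    "(e2 \<bullet> (G *v e1))\<^sup>2 = (e2 \<bullet> (G *v e3))\<^sup>2"
proof -
  obtain v1 v2 v3 a1 a2 a3 where on: "orthonormal3 v1 v2 v3"
    and ev: "G *v v1 = a1 *\<^sub>R v1" "G *v v2 = a2 *\<^sub>R v2" "G *v v3 = a3 *\<^sub>R v3"
    using symmetric_orthonormal3_eigenbasis[OF symG] by metis
  note o = orthonormal3_inner[OF on]
  define c where "c = sqrt (1 / 2)"
  have c2: "c * c = 1 / 2" unfolding c_def by (simp flip: real_sqrt_mult)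
  define e1 where "e1 = c *\<^sub>R (v1 + v3)"
  define e3 where "e3 = c *\<^sub>R (v1 - v3)"
  have "orthonormal3 e1 v2 e3"
    unfolding orthonormal3_def e1_def e3_def using o c2
    by (simp add: inner_add_left inner_add_right inner_diff_left inner_diff_right algebra_simps)
  moreover have "e1 \<bullet> (G *v e1) = e3 \<bullet> (G *v e3)" and "(v2 \<bullet> (G *v e1))\<^sup>2 = (v2 \<bullet> (G *v e3))\<^sup>2"
    unfolding e1_def e3_def using o
    by (simp_all add: matrix_vector_right_distrib matrix_vector_mult_diff_distrib matrix_vector_mult_scaleR
        ev inner_add_left inner_add_right inner_diff_left inner_diff_right algebra_simps)
  ultimately show ?thesis using that by blast
qed

lemma trace_orthonormal3_eigen_products:
  fixes C G :: "real^3^3"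
  assumes on: "orthonormal3 u1 u2 u3" and symC: "transpose C = C" and symG: "transpose G = G"
    and ev: "C *v u1 = l1 *\<^sub>R u1" "C *v u2 = l2 *\<^sub>R u2" "C *v u3 = l3 *\<^sub>R u3"
  shows "trace (C ** G) = l1 * (u1 \<bullet> (G *v u1)) + l2 * (u2 \<bullet> (G *v u2)) + l3 * (u3 \<bullet> (G *v u3))"
    and "trace (C ** G ** C ** G) =
      (l1 * (u1 \<bullet> (G *v u1)))\<^sup>2 + (l2 * (u2 \<bullet> (G *v u2)))\<^sup>2 + (l3 * (u3 \<bullet> (G *v u3)))\<^sup>2
      + 2 * l1 * l2 * (u1 \<bullet> (G *v u2))\<^sup>2 + 2 * l1 * l3 * (u1 \<bullet> (G *v u3))\<^sup>2
      + 2 * l2 * l3 * (u2 \<bullet> (G *v u3))\<^sup>2"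
proof -
  have C_swap: "u \<bullet> (C *v y) = (C *v u) \<bullet> y" for u y by (rule inner_mult_vec_symmetric[OF symC])
  have G_swap: "u \<bullet> (G *v y) = y \<bullet> (G *v u)" for u y
    using inner_mult_vec_symmetric[OF symG, of u y] by (simp add: inner_commute)
  show "trace (C ** G) = l1 * (u1 \<bullet> (G *v u1)) + l2 * (u2 \<bullet> (G *v u2)) + l3 * (u3 \<bullet> (G *v u3))"
    unfolding trace_orthonormal3[OF on]
    by (simp only: matrix_vector_mul_assoc[symmetric] C_swap ev inner_scaleR_left)
  have expand: "(G *v u) \<bullet> (C *v (G *v u)) = l1 * (u1 \<bullet> (G *v u))\<^sup>2
      + l2 * (u2 \<bullet> (G *v u))\<^sup>2 + l3 * (u3 \<bullet> (G *v u))\<^sup>2" for u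
    using orthonormal3_eigen_inner[OF on symC ev, of "G *v u" "G *v u"] by (simp add: power2_eq_square)
  have "u \<bullet> ((C ** G ** C ** G) *v u) = (G *v (C *v u)) \<bullet> (C *v (G *v u))" for u
    by (simp add: matrix_vector_mul_assoc[symmetric] C_swap inner_mult_vec_symmetric[OF symG])
  then show "trace (C ** G ** C ** G) =
      (l1 * (u1 \<bullet> (G *v u1)))\<^sup>2 + (l2 * (u2 \<bullet> (G *v u2)))\<^sup>2 + (l3 * (u3 \<bullet> (G *v u3)))\<^sup>2
      + 2 * l1 * l2 * (u1 \<bullet> (G *v u2))\<^sup>2 + 2 * l1 * l3 * (u1 \<bullet> (G *v u3))\<^sup>2
      + 2 * l2 * l3 * (u2 \<bullet> (G *v u3))\<^sup>2"
    unfolding trace_orthonormal3[OF on]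
    by (simp add: ev matrix_vector_mult_scaleR expand G_swap[of u2 u1] G_swap[of u3 u1]
        G_swap[of u3 u2] power2_eq_square algebra_simps)
qed

lemma trace_twin_tensor_relations:
  assumes A: "sym_posdef A" and R: "in_O3 R" and BR: "B = R ** A ** transpose R"
  shows "trace (twin_tensor A B ** (A ** A)) = trace (A ** A)"
    and "trace (twin_tensor A B ** (A ** A) ** twin_tensor A B ** (A ** A)) = trace (A ** A ** (A ** A))"
proof -
  let ?C = "twin_tensor A B"
  have RR: "transpose R ** R = mat 1" using R unfolding in_O3_def orthogonal_matrix_def by simp
  have BB: "B ** B = R ** (A ** A) ** transpose R"
    unfolding BR by (simp add: matrix_mul_assoc) (simp add: RR matrix_mul_lid flip: matrix_mul_assoc)
  have BBBB: "B ** B ** (B ** B) = R ** (A ** A ** (A ** A)) ** transpose R"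
    unfolding BB by (simp add: matrix_mul_assoc) (simp add: RR matrix_mul_lid flip: matrix_mul_assoc)
  have RO: "orthogonal_matrix R" using R unfolding in_O3_def .
  have "trace (?C ** (A ** A)) = trace (A ** ?C ** A)"
    using trace_mul_sym[of "?C ** A" A] by (simp add: matrix_mul_assoc)
  also have "\<dots> = trace (A ** A)"
    unfolding twin_tensor_conj[OF A] BB by (rule trace_orthogonal_conj[OF RO])
  finally show "trace (?C ** (A ** A)) = trace (A ** A)" .
  have "trace (?C ** (A ** A) ** ?C ** (A ** A)) = trace ((A ** ?C ** A) ** (A ** ?C ** A))"
    using trace_mul_sym[of "?C ** A ** A ** ?C ** A" A] by (simp add: matrix_mul_assoc)
  also have "\<dots> = trace (A ** A ** (A ** A))"
    unfolding twin_tensor_conj[OF A] BBBB by (rule trace_orthogonal_conj[OF RO])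
  finally show "trace (?C ** (A ** A) ** ?C ** (A ** A)) = trace (A ** A ** (A ** A))" .
qed

lemma twin_trace_algebra:
  fixes l1 l3 g11 g22 g33 g12 g13 g23 :: real
  assumes l13: "l1 * l3 = 1" and l3: "l3 \<noteq> 1"
    and tr1: "l1 * g11 + g22 + l3 * g33 = g11 + g22 + g33"
    and tr2: "(l1 * g11)\<^sup>2 + g22\<^sup>2 + (l3 * g33)\<^sup>2 + 2 * l1 * g12\<^sup>2 + 2 * l1 * l3 * g13\<^sup>2 + 2 * l3 * g23\<^sup>2
      = g11\<^sup>2 + g22\<^sup>2 + g33\<^sup>2 + 2 * g12\<^sup>2 + 2 * g13\<^sup>2 + 2 * g23\<^sup>2"
  shows "g11 = l3 * g33" and "g12\<^sup>2 = l3 * g23\<^sup>2"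
proof -
  have "(l3 - 1) * (l3 * g33 - g11) = 0"
    using arg_cong[OF tr1, of "(*) l3"] l13 by (simp add: algebra_simps)
  then show g11: "g11 = l3 * g33" using l3 by simp
  have "(l3 - 1) * (l3 * g23\<^sup>2 - g12\<^sup>2) = 0"
    using arg_cong[OF tr2, of "(*) l3"] l13 g11 by algebra
  then show "g12\<^sup>2 = l3 * g23\<^sup>2" using l3 by simp
qed

text \<open>Conjugacy of \<open>B\<close> and \<open>A\<close> gives \<open>tr (C A\<^sup>2) = tr A\<^sup>2\<close> and \<open>tr (C A\<^sup>2 C A\<^sup>2) = tr A\<^sup>4\<close> for the
  twinning tensor \<open>C\<close>; both sides are evaluated in the eigenbasis of \<open>C\<close>.\<close>

lemma twin_eigenbasis_square_identities:
  assumes A: "sym_posdef A" and B: "sym_posdef B" and R: "in_O3 R"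
    and BR: "B = R ** A ** transpose R" and on: "orthonormal3 u1 u2 u3"
    and ev: "twin_tensor A B *v u1 = l1 *\<^sub>R u1" "twin_tensor A B *v u2 = u2"
      "twin_tensor A B *v u3 = l3 *\<^sub>R u3"
    and l13: "l1 * l3 = 1" and l3: "l3 \<noteq> 1"
  shows "u1 \<bullet> ((A ** A) *v u1) = l3 * (u3 \<bullet> ((A ** A) *v u3))"
    and "(u2 \<bullet> ((A ** A) *v u1))\<^sup>2 = l3 * (u2 \<bullet> ((A ** A) *v u3))\<^sup>2"
proof -
  have symG: "transpose (A ** A) = A ** A"
    using sym_posdef_symmetric[OF A] by (simp add: matrix_transpose_mul)
  have ev': "twin_tensor A B *v u2 = 1 *\<^sub>R u2" using ev(2) by simp
  note tensor = trace_orthonormal3_eigen_products[OF on transpose_twin_tensor[OF A B] symG ev(1) ev' ev(3)]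
  have "mat 1 *v u = 1 *\<^sub>R u" for u :: "real^3" by simp
  note identity = trace_orthonormal3_eigen_products[OF on transpose_mat symG this this this]
  have G_swap: "u \<bullet> ((A ** A) *v y) = y \<bullet> ((A ** A) *v u)" for u y
    using inner_mult_vec_symmetric[OF symG, of u y] by (simp add: inner_commute)
  show "u1 \<bullet> ((A ** A) *v u1) = l3 * (u3 \<bullet> ((A ** A) *v u3))"
    and "(u2 \<bullet> ((A ** A) *v u1))\<^sup>2 = l3 * (u2 \<bullet> ((A ** A) *v u3))\<^sup>2"
    using twin_trace_algebra[OF l13 l3] trace_twin_tensor_relations[OF A R BR] tensor identity
    by (auto simp: matrix_mul_lid G_swap[of u2 u1])
qed

text \<open>For \<open>B = P A P\<close> with \<open>P = refl_mat e\<close>, put \<open>p = A\<^sup>-\<^sup>1 e\<close> and \<open>q = A e\<close>, so that \<open>p \<bullet> q = 1\<close>.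
  Then \<open>A\<^sup>-\<^sup>1 P A = 2 p \<otimes> q - I\<close> and \<open>A P A\<^sup>-\<^sup>1\<close> is its transpose; both are involutions and the twinning
  tensor is their product.\<close>

lemma inner_matrix_inv_refl_axis:
  assumes A: "sym_posdef A" and e: "norm e = 1"
  shows "(matrix_inv A *v e) \<bullet> (A *v e) = 1"
  using inner_mult_vec_symmetric[OF transpose_matrix_inv_sym_posdef[OF A], of e "A *v e"] e
  by (simp add: sym_posdef_matrix_inv_mult_vec[OF A] dot_square_norm)

lemma refl_conj_inv_mult_vec:
  assumes A: "sym_posdef A"
  shows "matrix_inv A *v (refl_mat e *v (A *v y)) = (2 * ((A *v e) \<bullet> y)) *\<^sub>R (matrix_inv A *v e) - y"
  using inner_mult_vec_symmetric[OF sym_posdef_symmetric[OF A], of e y]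
  by (simp add: refl_mat_mult_vec matrix_vector_mult_diff_distrib matrix_vector_mult_scaleR
      sym_posdef_matrix_inv_mult_vec[OF A])

lemma refl_conj_mult_vec:
  assumes A: "sym_posdef A"
  shows "A *v (refl_mat e *v (matrix_inv A *v x)) = (2 * ((matrix_inv A *v e) \<bullet> x)) *\<^sub>R (A *v e) - x"
  using inner_mult_vec_symmetric[OF transpose_matrix_inv_sym_posdef[OF A], of e x]
  by (simp add: refl_mat_mult_vec matrix_vector_mult_diff_distrib matrix_vector_mult_scaleR
      sym_posdef_matrix_inv_mult_vec[OF A])

lemma twin_tensor_refl_conj:
  assumes A: "sym_posdef A" and e: "norm e = 1"
  defines "p \<equiv> matrix_inv A *v e" and "q \<equiv> A *v e"
  shows "twin_tensor A (refl_mat e ** A ** refl_mat e) *v x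
    = (2 * (q \<bullet> ((2 * (p \<bullet> x)) *\<^sub>R q - x))) *\<^sub>R p - ((2 * (p \<bullet> x)) *\<^sub>R q - x)"
proof -
  have "refl_mat e *v (refl_mat e *v z) = z" for z
    using refl_mat_involution[OF e] by (simp add: matrix_vector_mul_assoc)
  then have "twin_tensor A (refl_mat e ** A ** refl_mat e) *v x
      = matrix_inv A *v (refl_mat e *v (A *v (A *v (refl_mat e *v (matrix_inv A *v x)))))"
    unfolding twin_tensor_def by (simp add: matrix_vector_mul_assoc[symmetric])
  then show ?thesis
    unfolding p_def q_def refl_conj_mult_vec[OF A] refl_conj_inv_mult_vec[OF A] .
qed

lemma inner_twin_tensor_refl_conj:
  assumes A: "sym_posdef A" and e: "norm e = 1"
  defines "p \<equiv> matrix_inv A *v e" and "q \<equiv> A *v e"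
  shows "x \<bullet> (twin_tensor A (refl_mat e ** A ** refl_mat e) *v y)
    = 4 * (p \<bullet> x) * (p \<bullet> y) * (q \<bullet> q) - 2 * (p \<bullet> x) * (q \<bullet> y) - 2 * (p \<bullet> y) * (q \<bullet> x) + x \<bullet> y"
  unfolding twin_tensor_refl_conj[OF A e] p_def[symmetric] q_def[symmetric]
  by (simp add: inner_diff_left inner_diff_right inner_commute algebra_simps)

lemma twin_tensor_refl_conj_eigen_swap:
  assumes A: "sym_posdef A" and e: "norm e = 1"
    and ev: "twin_tensor A (refl_mat e ** A ** refl_mat e) *v u = l *\<^sub>R u" and l: "l * l' = 1"
  defines "w \<equiv> (2 * ((A *v e) \<bullet> u)) *\<^sub>R (matrix_inv A *v e) - u"
  shows "twin_tensor A (refl_mat e ** A ** refl_mat e) *v w = l' *\<^sub>R w" and "w \<bullet> w = l' * (u \<bullet> u)"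
proof -
  define p where "p = matrix_inv A *v e"
  define q where "q = A *v e"
  define k where "k y = (2 * (q \<bullet> y)) *\<^sub>R p - y" for y
  define k' where "k' x = (2 * (p \<bullet> x)) *\<^sub>R q - x" for x
  have pq: "p \<bullet> q = 1" unfolding p_def q_def by (rule inner_matrix_inv_refl_axis[OF A e])
  have C: "twin_tensor A (refl_mat e ** A ** refl_mat e) *v x = k (k' x)" for x
    unfolding twin_tensor_refl_conj[OF A e] k_def k'_def p_def q_def ..
  have kk: "k (k y) = y" and k'k': "k' (k' y) = y" for y
    unfolding k_def k'_def using pq by (simp_all add: inner_diff_right algebra_simps inner_commute)
  have k_scale: "k (c *\<^sub>R y) = c *\<^sub>R k y" and k'_scale: "k' (c *\<^sub>R y) = c *\<^sub>R k' y" for c y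
    unfolding k_def k'_def by (simp_all add: algebra_simps)
  have adjoint: "(k y) \<bullet> z = y \<bullet> (k' z)" for y z
    unfolding k_def k'_def by (simp add: inner_diff_left inner_diff_right inner_commute algebra_simps)
  have w: "w = k u" unfolding w_def k_def p_def q_def ..
  have "k' u = l *\<^sub>R w"
    using arg_cong[OF ev[unfolded C], of k] unfolding kk k_scale w .
  then have "k' (k' u) = k' (l *\<^sub>R w)" by simp
  then have "u = l *\<^sub>R k' w" by (simp only: k'k' k'_scale)
  then have k'w: "k' w = l' *\<^sub>R u"
    using l by (simp add: mult.commute)
  have "twin_tensor A (refl_mat e ** A ** refl_mat e) *v w = k (l' *\<^sub>R u)"
    by (simp only: C k'w)
  then show "twin_tensor A (refl_mat e ** A ** refl_mat e) *v w = l' *\<^sub>R w"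
    by (simp only: k_scale w)
  show "w \<bullet> w = l' * (u \<bullet> u)"
    using adjoint[of u w] unfolding k'w w[symmetric] by simp
qed

section \<open>The axes of the reflections\<close>

definition twin_axis :: "real^3^3 \<Rightarrow> real^3 \<Rightarrow> real^3 \<Rightarrow> real \<Rightarrow> real \<Rightarrow> real^3" where
  "twin_axis A e1 e3 \<mu>3 s =
    (let \<delta>1 = inverse (sqrt (2 * (e1 \<bullet> ((A ** A) *v e1) + s * sqrt \<mu>3 * (e3 \<bullet> ((A ** A) *v e1)))));
         \<delta>3 = s * sqrt \<mu>3 * \<delta>1
     in \<delta>1 *\<^sub>R (A *v e1) + \<delta>3 *\<^sub>R (A *v e3))"

lemma twin_axis_eq:
  "twin_axis A e1 e3 \<mu>3 s
    = inverse (sqrt (2 * (e1 \<bullet> ((A ** A) *v e1) + s * sqrt \<mu>3 * (e3 \<bullet> ((A ** A) *v e1)))))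
      *\<^sub>R (A *v (e1 + (s * sqrt \<mu>3) *\<^sub>R e3))"
  unfolding twin_axis_def Let_def
  by (simp add: matrix_vector_right_distrib matrix_vector_mult_scaleR scaleR_add_right mult_ac)

lemma star_cond_uminus: "star_cond A B (- e) \<longleftrightarrow> star_cond A B e"
  unfolding star_cond_def by (simp add: refl_mat_uminus)

lemma twin_axis_refl_coordinates:
  assumes A: "sym_posdef A" and on: "orthonormal3 u1 u2 u3" and l3: "l3 > 0"
    and g: "u1 \<bullet> ((A ** A) *v u1) = l3 * (u3 \<bullet> ((A ** A) *v u3))"
    and s: "s \<in> {1, -1}"
    and sc: "s * sqrt l3 * (u2 \<bullet> ((A ** A) *v u3)) = - (u2 \<bullet> ((A ** A) *v u1))"
  defines "e \<equiv> twin_axis A u1 u3 l3 s"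
  obtains \<delta> D E where "norm e = 1" "\<delta>\<^sup>2 * (2 * D) = 1" "D = s * sqrt l3 * E"
    "(matrix_inv A *v e) \<bullet> u1 = \<delta>" "(matrix_inv A *v e) \<bullet> u2 = 0"
    "(matrix_inv A *v e) \<bullet> u3 = \<delta> * s * sqrt l3"
    "(A *v e) \<bullet> u1 = \<delta> * D" "(A *v e) \<bullet> u2 = 0" "(A *v e) \<bullet> u3 = \<delta> * E"
proof -
  note o = orthonormal3_inner[OF on]
  define G where "G = A ** A"
  define r where "r = sqrt l3"
  have r2: "r\<^sup>2 = l3" and s2: "s\<^sup>2 = 1" unfolding r_def using l3 s by auto
  have symG: "transpose G = G"
    unfolding G_def using sym_posdef_symmetric[OF A] by (simp add: matrix_transpose_mul)
  have G_swap: "u \<bullet> (G *v y) = y \<bullet> (G *v u)" for u y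
    using inner_mult_vec_symmetric[OF symG, of u y] by (simp add: inner_commute)
  define v where "v = u1 + (s * r) *\<^sub>R u3"
  define D where "D = u1 \<bullet> (G *v u1) + s * r * (u3 \<bullet> (G *v u1))"
  define E where "E = u3 \<bullet> (G *v u1) + s * r * (u3 \<bullet> (G *v u3))"
  define \<delta> where "\<delta> = inverse (sqrt (2 * D))"
  have e: "e = \<delta> *\<^sub>R (A *v v)"
    unfolding e_def twin_axis_eq \<delta>_def D_def v_def G_def r_def ..
  have Gv: "u \<bullet> (G *v v) = u \<bullet> (G *v u1) + s * r * (u \<bullet> (G *v u3))" for u
    unfolding v_def by (simp add: matrix_vector_right_distrib matrix_vector_mult_scaleR inner_add_right)
  have "D = s * r * E"
    using g s2 r2 unfolding D_def E_def G_def by (simp add: algebra_simps power2_eq_square)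
  moreover have AvAv: "(A *v v) \<bullet> (A *v v) = 2 * D"
    using Gv[of v] g s2 r2 G_swap[of u1 u3]
    unfolding G_def D_def v_def
    by (simp add: matrix_vector_mul_assoc[symmetric] inner_mult_vec_symmetric[OF sym_posdef_symmetric[OF A]]
        inner_add_left power2_eq_square algebra_simps)
  moreover have "u1 \<bullet> v = 1" unfolding v_def using o by (simp add: inner_add_right)
  then have "A *v v \<noteq> 0" using sym_posdef_eq_0[OF A, of v] by auto
  then have "(A *v v) \<bullet> (A *v v) > 0" by simp
  then have "D > 0" using AvAv by simp
  then have \<delta>: "\<delta>\<^sup>2 * (2 * D) = 1" unfolding \<delta>_def by (simp add: power_inverse)
  moreover have "e \<bullet> e = 1"
    using AvAv \<delta> unfolding e by (simp add: power2_eq_square)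
  then have "norm e = 1" by (simp add: norm_eq_1)
  moreover have "matrix_inv A *v e = \<delta> *\<^sub>R v"
    unfolding e by (simp add: matrix_vector_mult_scaleR sym_posdef_matrix_inv_mult_vec[OF A])
  moreover have "A *v e = \<delta> *\<^sub>R (G *v v)"
    unfolding e G_def by (simp add: matrix_vector_mult_scaleR matrix_vector_mul_assoc)
  ultimately show ?thesis
    using that[of \<delta> D E] o Gv[of u1] Gv[of u2] Gv[of u3] sc G_swap[of u1 u3] G_swap[of u1 u2]
    unfolding v_def D_def E_def G_def r_def
    by (simp add: inner_add_left inner_commute algebra_simps)
qed

lemma star_cond_twin_axis:
  assumes A: "sym_posdef A" and B: "sym_posdef B" and on: "orthonormal3 u1 u2 u3"
    and ev: "twin_tensor A B *v u1 = l1 *\<^sub>R u1" "twin_tensor A B *v u2 = u2"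
      "twin_tensor A B *v u3 = l3 *\<^sub>R u3"
    and l13: "l1 * l3 = 1" and l3: "l3 > 0"
    and g: "u1 \<bullet> ((A ** A) *v u1) = l3 * (u3 \<bullet> ((A ** A) *v u3))"
    and s: "s \<in> {1, -1}"
    and sc: "s * sqrt l3 * (u2 \<bullet> ((A ** A) *v u3)) = - (u2 \<bullet> ((A ** A) *v u1))"
  shows "star_cond A B (twin_axis A u1 u3 l3 s)"
proof -
  define e where "e = twin_axis A u1 u3 l3 s"
  define p where "p = matrix_inv A *v e"
  define q where "q = A *v e"
  obtain \<delta> D E where e: "norm e = 1" and \<delta>: "\<delta>\<^sup>2 * (2 * D) = 1" and DE: "D = s * sqrt l3 * E"
    and p: "p \<bullet> u1 = \<delta>" "p \<bullet> u2 = 0" "p \<bullet> u3 = \<delta> * s * sqrt l3"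
    and q: "q \<bullet> u1 = \<delta> * D" "q \<bullet> u2 = 0" "q \<bullet> u3 = \<delta> * E"
    using twin_axis_refl_coordinates[OF A on l3 g s sc] unfolding e_def p_def q_def by metis
  have qq: "q \<bullet> q = \<delta>\<^sup>2 * (D\<^sup>2 + E\<^sup>2)"
    using orthonormal3_parseval[OF on, of q q] q by (simp add: inner_commute power2_eq_square algebra_simps)
  have r2: "(sqrt l3)\<^sup>2 = l3" and s2: "s\<^sup>2 = 1" using l3 s by auto
  have "twin_tensor A B = twin_tensor A (refl_mat e ** A ** refl_mat e)"
  proof (rule orthonormal3_matrix_eqI[OF on])
    fix x y assume "x \<in> {u1, u2, u3}" "y \<in> {u1, u2, u3}"
    \<comment> \<open>entries \<open>(1,1)\<close>, \<open>(1,3)\<close>, \<open>(3,3)\<close> of the twinning tensor of \<open>P A P\<close> in the frame \<open>u1, u2, u3\<close>\<close>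
    moreover have "4 * \<delta> * \<delta> * (\<delta>\<^sup>2 * (D\<^sup>2 + E\<^sup>2)) - 2 * \<delta> * (\<delta> * D) - 2 * \<delta> * (\<delta> * D) + 1 = l1"
      and "4 * \<delta> * (\<delta> * s * sqrt l3) * (\<delta>\<^sup>2 * (D\<^sup>2 + E\<^sup>2)) - 2 * \<delta> * (\<delta> * E)
        - 2 * (\<delta> * s * sqrt l3) * (\<delta> * D) = 0"
      and "4 * (\<delta> * s * sqrt l3) * (\<delta> * s * sqrt l3) * (\<delta>\<^sup>2 * (D\<^sup>2 + E\<^sup>2))
        - 2 * (\<delta> * s * sqrt l3) * (\<delta> * E) - 2 * (\<delta> * s * sqrt l3) * (\<delta> * E) + 1 = l3"
      using \<delta> r2 l13 s2 DE by algebra+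
    ultimately show "x \<bullet> (twin_tensor A B *v y) = x \<bullet> (twin_tensor A (refl_mat e ** A ** refl_mat e) *v y)"
      unfolding inner_twin_tensor_refl_conj[OF A e] p_def[symmetric] q_def[symmetric]
      using ev orthonormal3_inner[OF on] p q qq by (auto simp: algebra_simps)
  qed
  then have "B = refl_mat e ** A ** refl_mat e"
    by (rule twin_tensor_eq_imp_eq[OF A B sym_posdef_refl_conj[OF A e]])
  then show ?thesis unfolding star_cond_def e_def[symmetric] using e by simp
qed

text \<open>By \<open>twin_tensor_refl_conj_eigen_swap\<close>, \<open>w = (2 p \<otimes> q - I) u1\<close> is an eigenvector of the twinning
  tensor with eigenvalue \<open>l3\<close> and \<open>w \<bullet> w = l3\<close>, hence \<open>w = \<plusminus>\<surd>l3 u3\<close>; this places \<open>p = A\<^sup>-\<^sup>1 e\<close> in the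
  plane of \<open>u1\<close> and \<open>u3\<close>.\<close>

lemma refl_axis_in_twin_eigenplane:
  assumes A: "sym_posdef A" and B: "sym_posdef B" and on: "orthonormal3 u1 u2 u3"
    and ev: "twin_tensor A B *v u1 = l1 *\<^sub>R u1" "twin_tensor A B *v u2 = u2"
      "twin_tensor A B *v u3 = l3 *\<^sub>R u3"
    and l13: "l1 * l3 = 1" and l3: "l3 > 1" and st: "star_cond A B e"
  obtains t where "t \<in> {1, -1}" "(A *v e) \<bullet> u1 \<noteq> 0" "(A *v e) \<bullet> u2 = 0"
    "matrix_inv A *v e = (1 / (2 * ((A *v e) \<bullet> u1))) *\<^sub>R (u1 + (t * sqrt l3) *\<^sub>R u3)"
proof -
  note o = orthonormal3_inner[OF on]
  have e: "norm e = 1" and B_eq: "B = refl_mat e ** A ** refl_mat e"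
    using st unfolding star_cond_def by auto
  have symC: "transpose (twin_tensor A B) = twin_tensor A B" by (rule transpose_twin_tensor[OF A B])
  have "l1 = 1 / l3" using l13 l3 by (simp add: field_simps)
  then have "l1 < 1" using l3 by simp
  have ev2: "twin_tensor A B *v u2 = 1 *\<^sub>R u2" using ev(2) by simp
  define p where "p = matrix_inv A *v e"
  define a1 where "a1 = (A *v e) \<bullet> u1"
  define w where "w = (2 * a1) *\<^sub>R p - u1"
  have w_eigen: "twin_tensor A B *v w = l3 *\<^sub>R w" and "w \<bullet> w = l3"
    using twin_tensor_refl_conj_eigen_swap[OF A e ev(1)[unfolded B_eq] l13] o
    unfolding w_def a1_def p_def B_eq by simp_all
  have "u1 \<bullet> w = 0" "u2 \<bullet> w = 0"
    using eigenvectors_orthogonal[OF symC ev(1) w_eigen] eigenvectors_orthogonal[OF symC ev2 w_eigen]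
      \<open>l1 < 1\<close> l3 by auto
  moreover have "(u3 \<bullet> w)\<^sup>2 = l3"
    using orthonormal3_parseval[OF on, of w w] \<open>w \<bullet> w = l3\<close> calculation by (simp add: power2_eq_square)
  then obtain t where t: "t \<in> {1, -1}" and "u3 \<bullet> w = t * sqrt l3"
  proof -
    define t where "t = (u3 \<bullet> w) / sqrt l3"
    have "u3 \<bullet> w = t * sqrt l3" unfolding t_def using l3 by simp
    moreover from this have "t\<^sup>2 = 1"
      using \<open>(u3 \<bullet> w)\<^sup>2 = l3\<close> l3 by (simp add: power_mult_distrib)
    ultimately show ?thesis using that by (auto simp: power2_eq_1_iff)
  qed
  ultimately have w_eq: "w = (t * sqrt l3) *\<^sub>R u3"
    by (intro orthonormal3_vec_eqI[OF on]) (simp_all add: o)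
  have "2 * a1 * (p \<bullet> u1) = 1" using \<open>u1 \<bullet> w = 0\<close> o unfolding w_def by (simp add: inner_diff_right inner_commute)
  then have "a1 \<noteq> 0" by auto
  have p_eq: "p = (1 / (2 * a1)) *\<^sub>R (u1 + (t * sqrt l3) *\<^sub>R u3)"
    using \<open>a1 \<noteq> 0\<close> w_eq[symmetric] unfolding w_def by (simp add: algebra_simps)
  have "twin_tensor A B *v ((2 * ((A *v e) \<bullet> u2)) *\<^sub>R p - u2) = 1 *\<^sub>R ((2 * ((A *v e) \<bullet> u2)) *\<^sub>R p - u2)"
    using twin_tensor_refl_conj_eigen_swap(1)[OF A e ev2[unfolded B_eq], of 1]
    unfolding p_def B_eq by simp
  then have "u1 \<bullet> ((2 * ((A *v e) \<bullet> u2)) *\<^sub>R p - u2) = 0"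
    using eigenvectors_orthogonal[OF symC ev(1)] \<open>l1 < 1\<close> by (metis less_irrefl)
  then have "(A *v e) \<bullet> u2 = 0"
    using \<open>2 * a1 * (p \<bullet> u1) = 1\<close> o by (auto simp: inner_diff_right inner_commute)
  then show ?thesis using that t \<open>a1 \<noteq> 0\<close> p_eq unfolding p_def a1_def by blast
qed

lemma refl_axis_eq_twin_axis:
  assumes A: "sym_posdef A" and on: "orthonormal3 u1 u2 u3"
    and a1: "(A *v e) \<bullet> u1 \<noteq> 0" and q2: "(A *v e) \<bullet> u2 = 0"
    and p: "matrix_inv A *v e = (1 / (2 * ((A *v e) \<bullet> u1))) *\<^sub>R (u1 + (t * sqrt l3) *\<^sub>R u3)"
  shows "t * sqrt l3 * (u2 \<bullet> ((A ** A) *v u3)) = - (u2 \<bullet> ((A ** A) *v u1))"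
    and "e = twin_axis A u1 u3 l3 t \<or> e = - twin_axis A u1 u3 l3 t"
proof -
  define a where "a = (A *v e) \<bullet> u1"
  define v where "v = u1 + (t * sqrt l3) *\<^sub>R u3"
  define D where "D = u1 \<bullet> ((A ** A) *v u1) + t * sqrt l3 * (u3 \<bullet> ((A ** A) *v u1))"
  have e: "e = (1 / (2 * a)) *\<^sub>R (A *v v)"
    using arg_cong[OF p, of "(*v) A"] unfolding a_def[symmetric] v_def[symmetric]
    by (simp add: sym_posdef_matrix_inv_mult_vec[OF A] matrix_vector_mult_scaleR)
  have "A *v e = (1 / (2 * a)) *\<^sub>R ((A ** A) *v u1 + (t * sqrt l3) *\<^sub>R ((A ** A) *v u3))"
    unfolding e v_def
    by (simp add: matrix_vector_mul_assoc matrix_vector_mult_scaleR matrix_vector_right_distrib)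
  then have q: "(A *v e) \<bullet> u
      = (1 / (2 * a)) * (((A ** A) *v u1) \<bullet> u + t * sqrt l3 * (((A ** A) *v u3) \<bullet> u))" for u
    by (simp add: inner_add_left)
  show "t * sqrt l3 * (u2 \<bullet> ((A ** A) *v u3)) = - (u2 \<bullet> ((A ** A) *v u1))"
    using q[of u2] q2 a1 unfolding a_def by (simp add: add_eq_0_iff inner_commute)
  have "u1 \<bullet> ((A ** A) *v u3) = u3 \<bullet> ((A ** A) *v u1)"
    using inner_mult_vec_symmetric[of "A ** A" u1 u3] sym_posdef_symmetric[OF A]
    by (simp add: matrix_transpose_mul inner_commute)
  then have "a = (1 / (2 * a)) * D" using q[of u1] unfolding a_def D_def by (simp add: inner_commute)
  then have "D = 2 * a\<^sup>2" using a1 unfolding a_def by (simp add: field_simps power2_eq_square)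
  then have "2 * D = (2 * \<bar>a\<bar>)\<^sup>2" by (simp add: power2_eq_square)
  then have "sqrt (2 * D) = \<bar>2 * \<bar>a\<bar>\<bar>" by (simp only: real_sqrt_abs)
  then have "sqrt (2 * D) = 2 * \<bar>a\<bar>" by simp
  then have "twin_axis A u1 u3 l3 t = (1 / (2 * \<bar>a\<bar>)) *\<^sub>R (A *v v)"
    unfolding twin_axis_eq D_def[symmetric] v_def[symmetric] by (simp add: inverse_eq_divide)
  then show "e = twin_axis A u1 u3 l3 t \<or> e = - twin_axis A u1 u3 l3 t"
    unfolding e by (cases "a \<ge> 0") auto
qed

lemma exists_sign_sqrt_eq:
  fixes a b c :: real
  assumes "a\<^sup>2 = c * b\<^sup>2" and "c > 0"
  obtains s where "s \<in> {1, -1}" "s * sqrt c * b = - a"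
proof (cases "b = 0")
  case True
  then show ?thesis using assms that[of 1] by simp
next
  case False
  define s where "s = - a / (sqrt c * b)"
  have sb: "s * sqrt c * b = - a" unfolding s_def using False \<open>c > 0\<close> by simp
  then have "s\<^sup>2 * (c * b\<^sup>2) = a\<^sup>2"
    using \<open>c > 0\<close> by (metis power2_minus power_mult_distrib real_sqrt_pow2 less_imp_le mult.assoc)
  moreover have "a\<^sup>2 \<noteq> 0" using assms False by simp
  ultimately have "s\<^sup>2 = 1" using assms(1) by simp
  then show ?thesis using that sb by (auto simp: power2_eq_1_iff)
qed

lemma star_cond_set_eq_twin_axes:
  assumes A: "sym_posdef A" and B: "sym_posdef B" and on: "orthonormal3 u1 u2 u3"
    and ev: "twin_tensor A B *v u1 = l1 *\<^sub>R u1" "twin_tensor A B *v u2 = u2"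
      "twin_tensor A B *v u3 = l3 *\<^sub>R u3"
    and l13: "l1 * l3 = 1" and l3: "l3 > 1"
    and g: "u1 \<bullet> ((A ** A) *v u1) = l3 * (u3 \<bullet> ((A ** A) *v u3))"
  shows "{e. star_cond A B e} = {\<sigma> *\<^sub>R twin_axis A u1 u3 l3 s | \<sigma> s. \<sigma> \<in> {1, -1} \<and> s \<in> {1, -1}
    \<and> s * sqrt l3 * (u2 \<bullet> ((A ** A) *v u3)) = - (u2 \<bullet> ((A ** A) *v u1))}"
proof (intro set_eqI iffI)
  fix e assume "e \<in> {e. star_cond A B e}"
  then obtain t where t: "t \<in> {1, -1}" and axis: "(A *v e) \<bullet> u1 \<noteq> 0" "(A *v e) \<bullet> u2 = 0"
      "matrix_inv A *v e = (1 / (2 * ((A *v e) \<bullet> u1))) *\<^sub>R (u1 + (t * sqrt l3) *\<^sub>R u3)"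
    using refl_axis_in_twin_eigenplane[OF A B on ev l13 l3] by blast
  note sc = refl_axis_eq_twin_axis(1)[OF A on axis]
  obtain \<sigma> where "\<sigma> \<in> {1, -1}" "e = \<sigma> *\<^sub>R twin_axis A u1 u3 l3 t"
    using refl_axis_eq_twin_axis(2)[OF A on axis] by (metis insertCI scaleR_minus1_left scaleR_one)
  with t sc show "e \<in> {\<sigma> *\<^sub>R twin_axis A u1 u3 l3 s | \<sigma> s. \<sigma> \<in> {1, -1} \<and> s \<in> {1, -1}
    \<and> s * sqrt l3 * (u2 \<bullet> ((A ** A) *v u3)) = - (u2 \<bullet> ((A ** A) *v u1))}"
    by blast
next
  fix e assume "e \<in> {\<sigma> *\<^sub>R twin_axis A u1 u3 l3 s | \<sigma> s. \<sigma> \<in> {1, -1} \<and> s \<in> {1, -1}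
    \<and> s * sqrt l3 * (u2 \<bullet> ((A ** A) *v u3)) = - (u2 \<bullet> ((A ** A) *v u1))}"
  then obtain \<sigma> s where "e = \<sigma> *\<^sub>R twin_axis A u1 u3 l3 s" "\<sigma> \<in> {1, -1}" "s \<in> {1, -1}"
    "s * sqrt l3 * (u2 \<bullet> ((A ** A) *v u3)) = - (u2 \<bullet> ((A ** A) *v u1))"
    by blast
  with star_cond_twin_axis[OF A B on ev l13 _ g] l3 show "e \<in> {e. star_cond A B e}"
    by (auto simp: star_cond_uminus)
qed

lemma rank_one_connected_imp_star_cond:
  assumes A: "sym_posdef A" and B: "sym_posdef B" and R: "in_O3 R"
    and BR: "B = R ** A ** transpose R" and rank_one: "rank_one_connected A B"
  shows "\<exists>e. star_cond A B e"
proof -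
  obtain u1 u2 u3 l1 l3 where on: "orthonormal3 u1 u2 u3"
    and ev: "twin_tensor A B *v u1 = l1 *\<^sub>R u1" "twin_tensor A B *v u2 = u2"
      "twin_tensor A B *v u3 = l3 *\<^sub>R u3"
    and l: "0 < l1" "l1 \<le> 1" "1 \<le> l3" "l1 * l3 = 1"
    using rank_one_connected_twin_eigenbasis[OF A B R BR rank_one] by blast
  show ?thesis
  proof (cases "l3 = 1")
    case True
    then have "twin_tensor A B = mat 1"
      using orthonormal3_fixed_imp_identity[OF on] ev l(4) by simp
    then show ?thesis using exists_eigenvector_star_cond[OF A] twin_tensor_eq_identity_imp_eq[OF A B] by auto
  next
    case False
    note g = twin_eigenbasis_square_identities[OF A B R BR on ev l(4) False]
    obtain s where "s \<in> {1, -1}" "s * sqrt l3 * (u2 \<bullet> ((A ** A) *v u3)) = - (u2 \<bullet> ((A ** A) *v u1))"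
      using exists_sign_sqrt_eq[OF g(2)] l(3) by auto
    then show ?thesis using star_cond_twin_axis[OF A B on ev l(4) _ g(1)] l(3) by auto
  qed
qed

lemma rank_one_connected_spectral_data:
  assumes A: "sym_posdef A" and B: "sym_posdef B" and R: "in_O3 R"
    and BR: "B = R ** A ** transpose R" and rank_one: "rank_one_connected A B"
  shows "\<exists>e1 e2 e3 \<mu>1 \<mu>3. orthonormal3 e1 e2 e3
          \<and> matrix_inv A ** (B ** B) ** matrix_inv A
              = \<mu>1 *\<^sub>R outer e1 e1 + outer e2 e2 + \<mu>3 *\<^sub>R outer e3 e3
          \<and> 0 < \<mu>1 \<and> \<mu>1 \<le> 1 \<and> 1 \<le> \<mu>3
          \<and> \<mu>1 * \<mu>3 = 1
          \<and> e1 \<bullet> ((A ** A) *v e1) = \<mu>3 * (e3 \<bullet> ((A ** A) *v e3))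
          \<and> (e2 \<bullet> ((A ** A) *v e1))\<^sup>2 = \<mu>3 * (e2 \<bullet> ((A ** A) *v e3))\<^sup>2
          \<and> (\<mu>3 > 1 \<longrightarrow>
               {e. star_cond A B e} =
               {\<sigma> *\<^sub>R twin_axis A e1 e3 \<mu>3 s | \<sigma> s.
                  \<sigma> \<in> {1, -1} \<and> s \<in> {1, -1}
                  \<and> s * sqrt \<mu>3 * (e2 \<bullet> ((A ** A) *v e3)) = - (e2 \<bullet> ((A ** A) *v e1))})
          \<and> (\<mu>3 = 1 \<longrightarrow> B = A \<and>
               (\<exists>e c. norm e = 1 \<and> A *v e = c *\<^sub>R e \<and> star_cond A B e))"
proof -
  obtain u1 u2 u3 l1 l3 where on: "orthonormal3 u1 u2 u3"
    and ev: "twin_tensor A B *v u1 = l1 *\<^sub>R u1" "twin_tensor A B *v u2 = u2"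
      "twin_tensor A B *v u3 = l3 *\<^sub>R u3"
    and l: "0 < l1" "l1 \<le> 1" "1 \<le> l3" "l1 * l3 = 1"
    using rank_one_connected_twin_eigenbasis[OF A B R BR rank_one] by blast
  show ?thesis
  proof (cases "l3 = 1")
    case True
    then have "twin_tensor A B = mat 1"
      using orthonormal3_fixed_imp_identity[OF on] ev l(4) by simp
    moreover obtain e1 e2 e3 where on': "orthonormal3 e1 e2 e3"
      and "e1 \<bullet> ((A ** A) *v e1) = e3 \<bullet> ((A ** A) *v e3)"
        "(e2 \<bullet> ((A ** A) *v e1))\<^sup>2 = (e2 \<bullet> ((A ** A) *v e3))\<^sup>2"
      using exists_orthonormal3_balanced[of "A ** A"] sym_posdef_symmetric[OF A]
      by (metis matrix_transpose_mul)
    moreover have "mat 1 = 1 *\<^sub>R outer e1 e1 + outer e2 e2 + 1 *\<^sub>R outer e3 e3"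
      using orthonormal3_eigen_outer[OF on', of "mat 1" 1 1 1] by simp
    ultimately show ?thesis
      using twin_tensor_eq_identity_imp_eq[OF A B] exists_eigenvector_star_cond[OF A]
      by (intro exI[of _ e1] exI[of _ e2] exI[of _ e3] exI[of _ 1]) (auto simp: twin_tensor_def)
  next
    case False
    have "twin_tensor A B *v u2 = 1 *\<^sub>R u2" using ev(2) by simp
    note decomposition = orthonormal3_eigen_outer[OF on ev(1) this ev(3)]
    note g = twin_eigenbasis_square_identities[OF A B R BR on ev l(4) False]
    show ?thesis
      using on decomposition l g False star_cond_set_eq_twin_axes[OF A B on ev l(4) _ g(1)]
      by (intro exI[of _ u1] exI[of _ u2] exI[of _ u3] exI[of _ l1] exI[of _ l3])
        (simp add: twin_tensor_def)
  qed
qed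

theorem proposition3:
  fixes A B R :: "real^3^3"
  assumes hA: "sym_posdef A" and hB: "sym_posdef B"
    and hR: "in_O3 R" and hBR: "B = R ** A ** transpose R"
  shows "(rank_one_connected A B \<longrightarrow> (\<exists>e. star_cond A B e))
    \<and> ((\<exists>e. star_cond A B e) \<longrightarrow> rank_one_connected A B)
    \<and> (rank_one_connected A B \<longrightarrow>
        (\<exists>e1 e2 e3 \<mu>1 \<mu>3. orthonormal3 e1 e2 e3
          \<and> matrix_inv A ** (B ** B) ** matrix_inv A
              = \<mu>1 *\<^sub>R outer e1 e1 + outer e2 e2 + \<mu>3 *\<^sub>R outer e3 e3
          \<and> 0 < \<mu>1 \<and> \<mu>1 \<le> 1 \<and> 1 \<le> \<mu>3
          \<and> \<mu>1 * \<mu>3 = 1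
          \<and> e1 \<bullet> ((A ** A) *v e1) = \<mu>3 * (e3 \<bullet> ((A ** A) *v e3))
          \<and> (e2 \<bullet> ((A ** A) *v e1))\<^sup>2 = \<mu>3 * (e2 \<bullet> ((A ** A) *v e3))\<^sup>2
          \<and> (\<mu>3 > 1 \<longrightarrow>
               {e. star_cond A B e} =
               {\<sigma> *\<^sub>R ((let \<delta>1 = inverse (sqrt (2 * (e1 \<bullet> ((A ** A) *v e1)
                                      + s * sqrt \<mu>3 * (e3 \<bullet> ((A ** A) *v e1)))));
                             \<delta>3 = s * sqrt \<mu>3 * \<delta>1
                         in \<delta>1 *\<^sub>R (A *v e1) + \<delta>3 *\<^sub>R (A *v e3))) | \<sigma> s.
                  \<sigma> \<in> {1, -1} \<and> s \<in> {1, -1}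
                  \<and> s * sqrt \<mu>3 * (e2 \<bullet> ((A ** A) *v e3)) = - (e2 \<bullet> ((A ** A) *v e1))})
          \<and> (\<mu>3 = 1 \<longrightarrow> B = A \<and>
               (\<exists>e c. norm e = 1 \<and> A *v e = c *\<^sub>R e \<and> star_cond A B e))))"
proof -
  have "(\<exists>e. star_cond A B e) \<longrightarrow> rank_one_connected A B"
    using rank_one_connected_refl_conj[OF hA] unfolding star_cond_def by blast
  then show ?thesis
    using rank_one_connected_imp_star_cond[OF hA hB hR hBR] rank_one_connected_spectral_data[OF hA hB hR hBR]
    unfolding twin_axis_def by blast
qed

end
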